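(* Fix $p\ge2$, $\beta>0$ and a sequence of $p$-tensors $\{\bm J_N\}_{N\ge1}$ (symmetric, with zero diagonals) such that (1) $\sup_{N\ge1}\mathbb E_\beta[\|\bm J_N(\bm Z)\|^4]<\infty$, where the expectation is over $\bm Z\sim\mathbb P_\beta$ and $\|\cdot\|$ is the operator norm; and (2) $\liminf_{N\to\infty}\frac1NF_N(\beta)>0$. Then, given a single sample $\bm X\sim\mathbb P_\beta$, the MPL estimate $\hat\beta_N(\bm X)$ is $\sqrt N$-consistent for $\beta$: for every $\delta>0$ there is $M=M(\delta,\beta)>0$ with $\mathbb P_\beta(\sqrt N|\hat\beta_N(\bm X)-\beta|\le M)>1-\delta$ for all $N$ large enough.
   Context: $p$-tensor Ising model: given a $p$-tensor $\bm J_N=((J_{i_1\dots i_p}))_{1\le i_1,\dots,i_p\le N}$ that is symmetric under permutations of indices and satisfies $J_{i_1\dots i_p}=0$ whenever two indices coincide, and $\beta\ge0$, $\mathbb P_\beta(\bm X)=\frac{1}{2^NZ_N(\beta)}e^{\beta H_N(\bm X)}$ on $\{-1,1\}^N$, with $H_N(\bm X)=\sum_{1\le i_1,\dots,i_p\le N}J_{i_1\dots i_p}X_{i_1}\cdots X_{i_p}$, $Z_N(\beta)=2^{-N}\sum_{\bm X}e^{\beta H_N(\bm X)}$, $F_N(\beta)=\log Z_N(\beta)$. Let $m_i(\bm X)=\sum_{i_2,\dots,i_p}J_{ii_2\dots i_p}X_{i_2}\cdots X_{i_p}$. The MPL estimate is $\hat\beta_N(\bm X)=\inf\{b\ge0:H_N(\bm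 X)=\sum_{i=1}^Nm_i(\bm X)\tanh(pb\,m_i(\bm X))\}$ (infimum of the empty set $=+\infty$). The local interaction matrix at $\bm x\in\{-1,1\}^N$ is the $N\times N$ matrix $\bm J_N(\bm x)$ with entries $J_{i_1i_2}(\bm x)=\sum_{i_3,\dots,i_p}J_{i_1i_2i_3\dots i_p}x_{i_3}\cdots x_{i_p}$ (for $p=2$, $\bm J_N(\bm x)=\bm J_N$). *)

theory Defs
  imports "HOL-Analysis.Analysis"
begin

definition spins :: "nat \<Rightarrow> (nat \<Rightarrow> real) set" where
  "spins N = {x. (\<forall>i<N. x i = 1 \<or> x i = -1) \<and> (\<forall>i\<ge>N. x i = 0)}"

definition idx :: "nat \<Rightarrow> nat \<Rightarrow> nat list set" where
  "idx N k = {is. length is = k \<and> set is \<subseteq> {..<N}}"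

definition valid_tensor :: "nat \<Rightarrow> nat \<Rightarrow> (nat list \<Rightarrow> real) \<Rightarrow> bool" where
  "valid_tensor p N J \<longleftrightarrow>
     (\<forall>is\<in>idx N p. \<forall>js\<in>idx N p. mset is = mset js \<longrightarrow> J is = J js) \<and>
     (\<forall>is\<in>idx N p. \<not> distinct is \<longrightarrow> J is = 0)"

definition hamiltonian :: "nat \<Rightarrow> nat \<Rightarrow> (nat list \<Rightarrow> real) \<Rightarrow> (nat \<Rightarrow> real) \<Rightarrow> real" where
  "hamiltonian p N J x = (\<Sum>is\<in>idx N p. J is * prod_list (map x is))"

definition local_field :: "nat \<Rightarrow> nat \<Rightarrow> (nat list \<Rightarrow> real) \<Rightarrow> (nat \<Rightarrow> real) \<Rightarrow> nat \<Rightarrow> real" where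
  "local_field p N J x i = (\<Sum>js\<in>idx N (p - 1). J (i # js) * prod_list (map x js))"

definition local_matrix :: "nat \<Rightarrow> nat \<Rightarrow> (nat list \<Rightarrow> real) \<Rightarrow> (nat \<Rightarrow> real) \<Rightarrow> nat \<Rightarrow> nat \<Rightarrow> real" where
  "local_matrix p N J x i1 i2 = (\<Sum>ks\<in>idx N (p - 2). J (i1 # i2 # ks) * prod_list (map x ks))"

definition op_norm :: "nat \<Rightarrow> (nat \<Rightarrow> nat \<Rightarrow> real) \<Rightarrow> real" where
  "op_norm N A = (SUP v\<in>{v :: nat \<Rightarrow> real. (\<Sum>j<N. (v j)\<^sup>2) \<le> 1}.
                    sqrt (\<Sum>i<N. (\<Sum>j<N. A i j * v j)\<^sup>2))"

definition partition_fn :: "nat \<Rightarrow> nat \<Rightarrow> (nat list \<Rightarrow> real) \<Rightarrow> real \<Rightarrow> real" where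
  "partition_fn p N J \<beta> = (\<Sum>x\<in>spins N. exp (\<beta> * hamiltonian p N J x)) / 2 ^ N"

definition free_energy :: "nat \<Rightarrow> nat \<Rightarrow> (nat list \<Rightarrow> real) \<Rightarrow> real \<Rightarrow> real" where
  "free_energy p N J \<beta> = ln (partition_fn p N J \<beta>)"

definition gibbs :: "nat \<Rightarrow> nat \<Rightarrow> (nat list \<Rightarrow> real) \<Rightarrow> real \<Rightarrow> (nat \<Rightarrow> real) \<Rightarrow> real" where
  "gibbs p N J \<beta> x = exp (\<beta> * hamiltonian p N J x) / (2 ^ N * partition_fn p N J \<beta>)"

definition gibbs_prob :: "nat \<Rightarrow> nat \<Rightarrow> (nat list \<Rightarrow> real) \<Rightarrow> real \<Rightarrow> ((nat \<Rightarrow> real) \<Rightarrow> bool) \<Rightarrow> real" where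
  "gibbs_prob p N J \<beta> E = (\<Sum>x\<in>{x\<in>spins N. E x}. gibbs p N J \<beta> x)"

definition gibbs_expect :: "nat \<Rightarrow> nat \<Rightarrow> (nat list \<Rightarrow> real) \<Rightarrow> real \<Rightarrow> ((nat \<Rightarrow> real) \<Rightarrow> real) \<Rightarrow> real" where
  "gibbs_expect p N J \<beta> f = (\<Sum>x\<in>spins N. gibbs p N J \<beta> x * f x)"

text \<open>MPL estimate: infimum over b >= 0 solving the pseudo-likelihood equation,
 in the extended reals (Inf {} = +infinity).\<close>
definition mpl_estimate :: "nat \<Rightarrow> nat \<Rightarrow> (nat list \<Rightarrow> real) \<Rightarrow> (nat \<Rightarrow> real) \<Rightarrow> ereal" where
  "mpl_estimate p N J x = Inf (ereal ` {b :: real. b \<ge> 0 \<and>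
      hamiltonian p N J x =
        (\<Sum>i<N. local_field p N J x i * tanh (real p * b * local_field p N J x i))})"

end

theory Submission
  imports Defs "HOL-Real_Asymp.Real_Asymp"
begin

text \<open>
  The MPL estimate is the root of the monotone estimating function
  \<open>g(b) = \<Sum>\<^sub>i m\<^sub>i tanh(p b m\<^sub>i)\<close>, which at \<open>b = \<beta>\<close> differs from \<open>H\<^sub>N(X)\<close> by the pseudo-likelihood
  score \<open>\<Sum>\<^sub>i U\<^sub>i\<close>, \<open>U\<^sub>i = m\<^sub>i(X\<^sub>i - tanh(p\<beta>m\<^sub>i))\<close>.
  Flipping the spin \<open>X\<^sub>j\<close> does not change \<open>m\<^sub>j\<close> and changes \<open>H\<^sub>N\<close> by \<open>2pX\<^sub>jm\<^sub>j\<close>, so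
  \<open>X\<^sub>j - tanh(p\<beta>m\<^sub>j)\<close> is orthogonal under \<open>\<bbbP>\<^sub>\<beta>\<close> to every function invariant under that flip.
  Expanding the cross terms \<open>U\<^sub>iU\<^sub>j\<close> to second order in the flip, and controlling them by the
  operator norm of \<open>J\<^sub>N(X)\<close>, gives \<open>\<bbbE>(\<Sum>\<^sub>i U\<^sub>i)\<^sup>2 = O(N)\<close> under the fourth moment assumption,
  so the score is \<open>O(\<surd>N)\<close> with high probability.
  On the other hand the slope of \<open>g\<close> near \<open>\<beta>\<close> is at least a constant times
  \<open>\<Sum>\<^sub>i m\<^sub>i\<^sup>2\<close> restricted to bounded \<open>m\<^sub>i\<close>, which is of order \<open>N\<close> as soon as \<open>\<Sum>\<^sub>i |m\<^sub>i| \<ge> dN\<close> and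
  \<open>\<parallel>J\<^sub>N(X)\<parallel>\<close> is bounded. Since \<open>H\<^sub>N \<le> \<Sum>\<^sub>i |m\<^sub>i|\<close>, configurations with \<open>\<Sum>\<^sub>i |m\<^sub>i| < dN\<close> have
  probability at most \<open>e\<^bsup>\<beta>dN - F\<^sub>N(\<beta>)\<^esup>\<close>, which is exponentially small when \<open>F\<^sub>N(\<beta>)\<close> grows linearly.
  Hence the root of \<open>g = H\<^sub>N\<close> lies within \<open>O(1/\<surd>N)\<close> of \<open>\<beta>\<close> with high probability.
\<close>

section \<open>Tensor contractions\<close>

definition tensor_contract ::
    "(nat list \<Rightarrow> real) \<Rightarrow> nat \<Rightarrow> nat list \<Rightarrow> nat \<Rightarrow> (nat \<Rightarrow> real) \<Rightarrow> real" where
  "tensor_contract J N pre q x = (\<Sum>js\<in>idx N q. J (pre @ js) * prod_list (map x js))"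

definition spin_flip :: "(nat \<Rightarrow> real) \<Rightarrow> nat \<Rightarrow> nat \<Rightarrow> real" where
  "spin_flip x j = x(j := - x j)"

lemma spin_flip_same [simp]: "spin_flip x j j = - x j"
  and spin_flip_other [simp]: "k \<noteq> j \<Longrightarrow> spin_flip x j k = x k"
  and spin_flip_spin_flip [simp]: "spin_flip (spin_flip x j) j = x"
  unfolding spin_flip_def by auto

lemma idx_0: "idx N 0 = {[]}"
  unfolding idx_def by auto

lemma idx_Suc: "idx N (Suc q) = (\<lambda>(k, js). k # js) ` ({..<N} \<times> idx N q)"
proof
  show "idx N (Suc q) \<subseteq> (\<lambda>(k, js). k # js) ` ({..<N} \<times> idx N q)"
  proof
    fix xs assume "xs \<in> idx N (Suc q)"
    then obtain k js where "xs = k # js" "k < N" "js \<in> idx N q"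
      unfolding idx_def by (cases xs) auto
    then show "xs \<in> (\<lambda>(k, js). k # js) ` ({..<N} \<times> idx N q)" by force
  qed
qed (auto simp: idx_def)

lemma sum_idx_Suc: "(\<Sum>xs\<in>idx N (Suc q). f xs) = (\<Sum>k<N. \<Sum>js\<in>idx N q. f (k # js))"
proof -
  have inj: "inj_on (\<lambda>(k, js). k # js) ({..<N} \<times> idx N q)"
    by (auto simp: inj_on_def)
  have "(\<Sum>xs\<in>idx N (Suc q). f xs) = (\<Sum>(k, js)\<in>{..<N} \<times> idx N q. f (k # js))"
    unfolding idx_Suc by (subst sum.reindex[OF inj]) (simp add: case_prod_unfold)
  also have "\<dots> = (\<Sum>k<N. \<Sum>js\<in>idx N q. f (k # js))"
    by (subst sum.cartesian_product[symmetric]) simp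
  finally show ?thesis .
qed

lemma tensor_contract_0: "tensor_contract J N pre 0 x = J pre"
  unfolding tensor_contract_def idx_0 by simp

lemma tensor_contract_Suc:
  "tensor_contract J N pre (Suc q) x = (\<Sum>k<N. x k * tensor_contract J N (pre @ [k]) q x)"
  unfolding tensor_contract_def sum_idx_Suc by (simp add: sum_distrib_left mult_ac)

lemma tensor_contract_swap:
  assumes v: "valid_tensor p N J" and len: "length pre + 2 + q = p"
    and pre: "set pre \<subseteq> {..<N}" and "k < N" "j < N"
  shows "tensor_contract J N (pre @ [k, j]) q x = tensor_contract J N (pre @ [j, k]) q x"
  unfolding tensor_contract_def
proof (rule sum.cong[OF refl])
  fix js assume "js \<in> idx N q"
  then have "pre @ [k, j] @ js \<in> idx N p" "pre @ [j, k] @ js \<in> idx N p"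
    using pre len \<open>k < N\<close> \<open>j < N\<close> unfolding idx_def by auto
  moreover have "mset (pre @ [k, j] @ js) = mset (pre @ [j, k] @ js)" by simp
  ultimately have "J (pre @ [k, j] @ js) = J (pre @ [j, k] @ js)"
    using v unfolding valid_tensor_def by blast
  then show "J ((pre @ [k, j]) @ js) * prod_list (map x js) =
      J ((pre @ [j, k]) @ js) * prod_list (map x js)" by simp
qed

lemma tensor_contract_repeated:
  assumes v: "valid_tensor p N J" and len: "length pre + 2 + q = p"
    and pre: "set pre \<subseteq> {..<N}" and "j < N"
  shows "tensor_contract J N (pre @ [j, j]) q x = 0"
  unfolding tensor_contract_def
proof (rule sum.neutral, intro ballI)
  fix js assume "js \<in> idx N q"
  then have "pre @ [j, j] @ js \<in> idx N p"
    using pre len \<open>j < N\<close> unfolding idx_def by auto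
  moreover have "\<not> distinct (pre @ [j, j] @ js)" by simp
  ultimately have "J (pre @ [j, j] @ js) = 0"
    using v unfolding valid_tensor_def by blast
  then show "J ((pre @ [j, j]) @ js) * prod_list (map x js) = 0" by simp
qed

text \<open>A contraction of degree \<open>q + 1\<close> is multilinear in the spins, and by symmetry and the zero
  diagonal each of its \<open>q + 1\<close> slots contributes the same amount when \<open>x\<^sub>j\<close> changes sign.\<close>

lemma tensor_contract_flip_diff:
  assumes v: "valid_tensor p N J" and j: "j < N"
  shows "length pre + Suc q = p \<Longrightarrow> set pre \<subseteq> {..<N} \<Longrightarrow>
    tensor_contract J N pre (Suc q) x - tensor_contract J N pre (Suc q) (spin_flip x j)
      = 2 * real (Suc q) * x j * tensor_contract J N (pre @ [j]) q x"
proof (induction q arbitrary: pre)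
  case 0
  have "tensor_contract J N pre (Suc 0) x - tensor_contract J N pre (Suc 0) (spin_flip x j) =
        (\<Sum>k<N. (if k = j then 2 * x j * J (pre @ [j]) else 0))"
    unfolding tensor_contract_Suc tensor_contract_0 sum_subtractf[symmetric]
    by (rule sum.cong) (auto simp: algebra_simps)
  also have "\<dots> = 2 * x j * J (pre @ [j])" using j by simp
  finally show ?case by (simp add: tensor_contract_0)
next
  case (Suc q)
  let ?t = "\<lambda>pre'. tensor_contract J N pre' (Suc q)"
  let ?s = "\<lambda>pre'. tensor_contract J N pre' q x"
  have IH: "?t (pre @ [k]) x - ?t (pre @ [k]) (spin_flip x j) = 2 * real (Suc q) * x j * ?s (pre @ [k, j])"
    if "k < N" for k
    using Suc.IH[of "pre @ [k]"] Suc.prems that by simp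
  have repeated: "?s (pre @ [j, j]) = 0"
    by (rule tensor_contract_repeated[OF v _ _ j]) (use Suc.prems in auto)
  have summand: "x k * ?t (pre @ [k]) x - spin_flip x j k * ?t (pre @ [k]) (spin_flip x j)
      = x k * (2 * real (Suc q) * x j * ?s (pre @ [k, j]))
        + (if k = j then 2 * x j * ?t (pre @ [j]) x else 0)" if k: "k < N" for k
  proof (cases "k = j")
    case True
    then have "?t (pre @ [j]) (spin_flip x j) = ?t (pre @ [j]) x"
      using IH[OF j] repeated by simp
    then show ?thesis using True repeated by simp
  next
    case False
    then show ?thesis using IH[OF k] by (simp add: algebra_simps)
  qed
  have swap: "?s (pre @ [k, j]) = ?s (pre @ [j, k])" if "k < N" for k
    using tensor_contract_swap[OF v _ Suc.prems(2) that j] Suc.prems(1) by simp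
  have "tensor_contract J N pre (Suc (Suc q)) x - tensor_contract J N pre (Suc (Suc q)) (spin_flip x j)
      = (\<Sum>k<N. x k * (2 * real (Suc q) * x j * ?s (pre @ [k, j]))
          + (if k = j then 2 * x j * ?t (pre @ [j]) x else 0))"
    unfolding tensor_contract_Suc[of J N pre "Suc q"] sum_subtractf[symmetric]
    by (rule sum.cong) (auto simp: summand)
  also have "\<dots> = 2 * real (Suc q) * x j * (\<Sum>k<N. x k * ?s (pre @ [j, k])) + 2 * x j * ?t (pre @ [j]) x"
  proof -
    have "(\<Sum>k<N. x k * (2 * real (Suc q) * x j * ?s (pre @ [k, j])))
        = (\<Sum>k<N. 2 * real (Suc q) * x j * (x k * ?s (pre @ [j, k])))"
      by (rule sum.cong[OF refl]) (simp add: swap)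
    then show ?thesis unfolding sum.distrib using j by (simp add: sum_distrib_left[symmetric])
  qed
  also have "(\<Sum>k<N. x k * ?s (pre @ [j, k])) = ?t (pre @ [j]) x"
    by (simp add: tensor_contract_Suc)
  finally show ?case by (simp add: algebra_simps)
qed

context
  fixes p N :: nat and J :: "nat list \<Rightarrow> real"
  assumes v: "valid_tensor p N J" and p2: "p \<ge> 2"
begin

lemma hamiltonian_eq_contract: "hamiltonian p N J x = tensor_contract J N [] p x"
  unfolding hamiltonian_def tensor_contract_def by simp

lemma local_field_eq_contract: "local_field p N J x i = tensor_contract J N [i] (p - 1) x"
  unfolding local_field_def tensor_contract_def by simp

lemma local_matrix_eq_contract: "local_matrix p N J x i k = tensor_contract J N [i, k] (p - 2) x"
  unfolding local_matrix_def tensor_contract_def by simp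

lemma hamiltonian_eq_sum_local_field: "hamiltonian p N J x = (\<Sum>i<N. x i * local_field p N J x i)"
proof -
  have "p = Suc (p - 1)" using p2 by simp
  then have "tensor_contract J N [] p x = tensor_contract J N [] (Suc (p - 1)) x" by simp
  then show ?thesis
    unfolding hamiltonian_eq_contract local_field_eq_contract tensor_contract_Suc by simp
qed

lemma local_field_eq_sum_local_matrix:
  "local_field p N J x i = (\<Sum>k<N. x k * local_matrix p N J x i k)"
proof -
  have "p - 1 = Suc (p - 2)" using p2 by simp
  then show ?thesis
    unfolding local_field_eq_contract local_matrix_eq_contract by (simp add: tensor_contract_Suc)
qed

lemma hamiltonian_flip_diff:
  assumes "i < N"
  shows "hamiltonian p N J x - hamiltonian p N J (spin_flip x i) = 2 * real p * x i * local_field p N J x i"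
proof -
  have "p = Suc (p - 1)" using p2 by simp
  moreover have "tensor_contract J N [] (Suc (p - 1)) x - tensor_contract J N [] (Suc (p - 1)) (spin_flip x i)
     = 2 * real (Suc (p - 1)) * x i * tensor_contract J N ([] @ [i]) (p - 1) x"
    by (rule tensor_contract_flip_diff[OF v assms]) (use p2 in auto)
  ultimately show ?thesis
    unfolding hamiltonian_eq_contract local_field_eq_contract by (metis append_Nil)
qed

lemma local_field_flip_diff:
  assumes "i < N" "k < N"
  shows "local_field p N J x i - local_field p N J (spin_flip x k) i
    = 2 * (real p - 1) * x k * local_matrix p N J x i k"
proof -
  have "p - 1 = Suc (p - 2)" "real (Suc (p - 2)) = real p - 1" using p2 by auto
  moreover have "tensor_contract J N [i] (Suc (p - 2)) x - tensor_contract J N [i] (Suc (p - 2)) (spin_flip x k)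
     = 2 * real (Suc (p - 2)) * x k * tensor_contract J N ([i] @ [k]) (p - 2) x"
    by (rule tensor_contract_flip_diff[OF v \<open>k < N\<close>]) (use p2 \<open>i < N\<close> in auto)
  ultimately show ?thesis
    unfolding local_field_eq_contract local_matrix_eq_contract by simp
qed

lemma local_matrix_diag: "i < N \<Longrightarrow> local_matrix p N J x i i = 0"
  unfolding local_matrix_eq_contract
  using tensor_contract_repeated[OF v, of "[]" "p - 2" i x] p2 by simp

lemma local_field_flip_same: "i < N \<Longrightarrow> local_field p N J (spin_flip x i) i = local_field p N J x i"
  using local_field_flip_diff[of i i x] local_matrix_diag[of i x] by simp

end

section \<open>Spin configurations and the Gibbs measure\<close>

lemma spins_0: "spins 0 = {\<lambda>_. 0}"
  unfolding spins_def by auto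

lemma spins_Suc: "spins (Suc N) = (\<lambda>x. x(N := 1)) ` spins N \<union> (\<lambda>x. x(N := -1)) ` spins N"
proof (intro equalityI subsetI)
  fix x assume x: "x \<in> spins (Suc N)"
  then have "x(N := 0) \<in> spins N" "x N = 1 \<or> x N = -1"
    unfolding spins_def by auto
  moreover have "x = (x(N := 0))(N := x N)" by simp
  ultimately show "x \<in> (\<lambda>x. x(N := 1)) ` spins N \<union> (\<lambda>x. x(N := -1)) ` spins N"
    by (metis UnI1 UnI2 image_eqI)
qed (auto simp: spins_def less_Suc_eq)

lemma finite_card_spins: "finite (spins N) \<and> card (spins N) = 2 ^ N"
proof (induction N)
  case 0
  then show ?case by (simp add: spins_0)
next
  case (Suc N)
  have inj: "inj_on (\<lambda>x. x(N := c)) (spins N)" for c :: real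
  proof (rule inj_onI)
    fix x y assume "x \<in> spins N" "y \<in> spins N" "x(N := c) = y(N := c)"
    show "x = y"
    proof
      fix i
      show "x i = y i"
      proof (cases "i = N")
        case True
        then show ?thesis using \<open>x \<in> spins N\<close> \<open>y \<in> spins N\<close> unfolding spins_def by auto
      next
        case False
        then show ?thesis using fun_cong[OF \<open>x(N := c) = y(N := c)\<close>, of i] by simp
      qed
    qed
  qed
  have "(\<lambda>x. x(N := 1)) ` spins N \<inter> (\<lambda>x. x(N := -1)) ` spins N = {}"
    by (auto dest: fun_cong[where x = N])
  then have "card (spins (Suc N)) = 2 ^ Suc N"
    unfolding spins_Suc using Suc by (simp add: card_Un_disjoint card_image[OF inj])
  then show ?case unfolding spins_Suc using Suc by simp
qed

lemma finite_spins: "finite (spins N)"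
  and card_spins: "card (spins N) = 2 ^ N"
  using finite_card_spins by blast+

lemma spin_cases: "x \<in> spins N \<Longrightarrow> i < N \<Longrightarrow> x i = 1 \<or> x i = -1"
  unfolding spins_def by auto

lemma abs_spin: "x \<in> spins N \<Longrightarrow> i < N \<Longrightarrow> \<bar>x i\<bar> = 1"
  using spin_cases by fastforce

lemma spin_square: "x \<in> spins N \<Longrightarrow> i < N \<Longrightarrow> (x i)\<^sup>2 = 1"
  using spin_cases by fastforce

lemma spin_flip_in_spins: "x \<in> spins N \<Longrightarrow> i < N \<Longrightarrow> spin_flip x i \<in> spins N"
  unfolding spins_def spin_flip_def by auto

lemma sum_spins_flip:
  assumes "i < N"
  shows "(\<Sum>x\<in>spins N. f x) = (\<Sum>x\<in>spins N. f (spin_flip x i))"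
proof -
  have "bij_betw (\<lambda>x. spin_flip x i) (spins N) (spins N)"
    by (rule bij_betwI[where g = "\<lambda>x. spin_flip x i"]) (auto simp: spin_flip_in_spins assms)
  then show ?thesis by (rule sum.reindex_bij_betw[symmetric])
qed

lemma partition_fn_pos: "partition_fn p N J \<beta> > 0"
proof -
  have "(\<lambda>i. if i < N then 1 else 0) \<in> spins N"
    unfolding spins_def by auto
  then have "(\<Sum>x\<in>spins N. exp (\<beta> * hamiltonian p N J x)) > 0"
    using finite_spins by (intro sum_pos2) auto
  then show ?thesis unfolding partition_fn_def by simp
qed

lemma gibbs_nonneg: "gibbs p N J \<beta> x \<ge> 0"
  unfolding gibbs_def using partition_fn_pos[of p N J \<beta>] by (simp add: zero_le_divide_iff)

lemma gibbs_expect_eq: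
  "gibbs_expect p N J \<beta> f
    = (\<Sum>x\<in>spins N. exp (\<beta> * hamiltonian p N J x) * f x) / (2 ^ N * partition_fn p N J \<beta>)"
  unfolding gibbs_expect_def gibbs_def by (simp add: sum_divide_distrib)

lemma sum_gibbs: "(\<Sum>x\<in>spins N. gibbs p N J \<beta> x) = 1"
  using partition_fn_pos[of p N J \<beta>]
  unfolding gibbs_def sum_divide_distrib[symmetric] partition_fn_def
  by (simp add: zero_less_divide_iff)

lemma gibbs_expect_sum:
  "finite I \<Longrightarrow> gibbs_expect p N J \<beta> (\<lambda>x. \<Sum>i\<in>I. f i x) = (\<Sum>i\<in>I. gibbs_expect p N J \<beta> (f i))"
  unfolding gibbs_expect_def by (simp add: sum_distrib_left sum.swap[of _ I])

lemma gibbs_expect_add: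
  "gibbs_expect p N J \<beta> (\<lambda>x. f x + g x) = gibbs_expect p N J \<beta> f + gibbs_expect p N J \<beta> g"
  unfolding gibbs_expect_def by (simp add: distrib_left sum.distrib)

lemma gibbs_expect_cmult: "gibbs_expect p N J \<beta> (\<lambda>x. a * f x) = a * gibbs_expect p N J \<beta> f"
  unfolding gibbs_expect_def by (simp add: sum_distrib_left mult_ac)

lemma gibbs_expect_const: "gibbs_expect p N J \<beta> (\<lambda>_. c) = c"
  unfolding gibbs_expect_def by (simp add: sum_distrib_right[symmetric] sum_gibbs)

lemma gibbs_expect_mono:
  "(\<And>x. x \<in> spins N \<Longrightarrow> f x \<le> g x) \<Longrightarrow> gibbs_expect p N J \<beta> f \<le> gibbs_expect p N J \<beta> g"
  unfolding gibbs_expect_def using gibbs_nonneg by (intro sum_mono mult_left_mono) auto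

lemma gibbs_prob_eq: "gibbs_prob p N J \<beta> E = (\<Sum>x\<in>spins N. if E x then gibbs p N J \<beta> x else 0)"
  unfolding gibbs_prob_def using finite_spins by (simp add: sum.inter_filter)

lemma gibbs_prob_markov:
  assumes f: "\<And>x. x \<in> spins N \<Longrightarrow> f x \<ge> 0" and "a > 0"
  shows "gibbs_prob p N J \<beta> (\<lambda>x. f x \<ge> a) \<le> gibbs_expect p N J \<beta> f / a"
proof -
  have "gibbs_prob p N J \<beta> (\<lambda>x. f x \<ge> a) \<le> (\<Sum>x\<in>spins N. gibbs p N J \<beta> x * f x / a)"
    unfolding gibbs_prob_eq
  proof (rule sum_mono)
    fix x assume "x \<in> spins N"
    have "gibbs p N J \<beta> x * 1 \<le> gibbs p N J \<beta> x * (f x / a)" if "f x \<ge> a"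
      using that \<open>a > 0\<close> gibbs_nonneg by (intro mult_left_mono) auto
    then show "(if f x \<ge> a then gibbs p N J \<beta> x else 0) \<le> gibbs p N J \<beta> x * f x / a"
      using gibbs_nonneg f[OF \<open>x \<in> spins N\<close>] \<open>a > 0\<close> by auto
  qed
  then show ?thesis unfolding gibbs_expect_def by (simp add: sum_divide_distrib)
qed

lemma gibbs_prob_ge_union_bound:
  assumes "\<And>x. x \<in> spins N \<Longrightarrow> E1 x \<Longrightarrow> E2 x \<Longrightarrow> E3 x \<Longrightarrow> E x"
  shows "gibbs_prob p N J \<beta> E \<ge> 1 - gibbs_prob p N J \<beta> (\<lambda>x. \<not> E1 x)
     - gibbs_prob p N J \<beta> (\<lambda>x. \<not> E2 x) - gibbs_prob p N J \<beta> (\<lambda>x. \<not> E3 x)"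
proof -
  have "(\<Sum>x\<in>spins N. gibbs p N J \<beta> x) \<le> (\<Sum>x\<in>spins N. (if E x then gibbs p N J \<beta> x else 0)
      + (if \<not> E1 x then gibbs p N J \<beta> x else 0) + (if \<not> E2 x then gibbs p N J \<beta> x else 0)
      + (if \<not> E3 x then gibbs p N J \<beta> x else 0))"
    using assms gibbs_nonneg by (intro sum_mono) auto
  then show ?thesis unfolding gibbs_prob_eq sum_gibbs by (simp add: sum.distrib)
qed

lemma exp_tanh_spin:
  fixes a s :: real
  assumes "s = 1 \<or> s = -1"
  shows "exp (- 2 * a * s) * (- s - tanh a) = - (s - tanh a)"
proof -
  define e where "e = exp (- 2 * a)"
  have e: "e > 0" and tanh: "tanh a = (1 - e) / (1 + e)"
    unfolding e_def by (simp_all add: tanh_real_altdef)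
  have "exp (- 2 * a * 1) = e" "exp (- 2 * a * (-1)) = 1 / e"
    unfolding e_def by (simp_all add: exp_minus_inverse divide_inverse flip: exp_minus)
  then show ?thesis
    using assms e unfolding tanh by (auto simp: field_simps)
qed

context
  fixes p N :: nat and J :: "nat list \<Rightarrow> real" and \<beta> :: real
  assumes v: "valid_tensor p N J" and p2: "p \<ge> 2"
begin

text \<open>The conditional law of \<open>X\<^sub>i\<close> given the other spins has mean \<open>tanh(p\<beta>m\<^sub>i)\<close>: pairing each
  configuration with its flip at \<open>i\<close> shows that the weighted summand is odd under the flip.\<close>

lemma gibbs_expect_residual_orthogonal:
  assumes i: "i < N" and f: "\<And>x. x \<in> spins N \<Longrightarrow> f (spin_flip x i) = f x"
  shows "gibbs_expect p N J \<beta>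
      (\<lambda>x. (x i - tanh (real p * \<beta> * local_field p N J x i)) * f x) = 0"
proof -
  define g where "g x = exp (\<beta> * hamiltonian p N J x) *
      ((x i - tanh (real p * \<beta> * local_field p N J x i)) * f x)" for x
  have odd: "g (spin_flip x i) = - g x" if x: "x \<in> spins N" for x
  proof -
    let ?m = "local_field p N J x i"
    have "exp (\<beta> * hamiltonian p N J (spin_flip x i))
        = exp (\<beta> * hamiltonian p N J x) * exp (- 2 * (real p * \<beta> * ?m) * x i)"
      using hamiltonian_flip_diff[OF v p2 i, of x]
      by (simp add: exp_add[symmetric] algebra_simps)
    then have "g (spin_flip x i) = exp (\<beta> * hamiltonian p N J x)
        * (exp (- 2 * (real p * \<beta> * ?m) * x i) * (- x i - tanh (real p * \<beta> * ?m))) * f x"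
      unfolding g_def local_field_flip_same[OF v p2 i] f[OF x] by simp
    also have "\<dots> = - g x"
      unfolding exp_tanh_spin[OF spin_cases[OF x i]] g_def by (simp add: algebra_simps)
    finally show ?thesis .
  qed
  have "(\<Sum>x\<in>spins N. g x) = (\<Sum>x\<in>spins N. g (spin_flip x i))"
    by (rule sum_spins_flip[OF i])
  also have "\<dots> = - (\<Sum>x\<in>spins N. g x)"
    by (simp add: odd sum_negf)
  finally show ?thesis unfolding gibbs_expect_eq g_def by simp
qed

lemma hamiltonian_le_sum_abs_local_field:
  assumes x: "x \<in> spins N"
  shows "hamiltonian p N J x \<le> (\<Sum>i<N. \<bar>local_field p N J x i\<bar>)"
  unfolding hamiltonian_eq_sum_local_field[OF v p2]
proof (rule sum_mono)
  fix i assume "i \<in> {..<N}"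
  then have "\<bar>x i\<bar> = 1" using abs_spin[OF x] by simp
  then show "x i * local_field p N J x i \<le> \<bar>local_field p N J x i\<bar>"
    by (metis abs_ge_self abs_mult mult_1)
qed

lemma gibbs_prob_small_fields:
  assumes "\<beta> \<ge> 0"
  shows "gibbs_prob p N J \<beta> (\<lambda>x. \<not> (\<Sum>i<N. \<bar>local_field p N J x i\<bar>) \<ge> d * real N)
     \<le> exp (\<beta> * d * real N - free_energy p N J \<beta>)"
proof -
  let ?Z = "partition_fn p N J \<beta>"
  have "gibbs_prob p N J \<beta> (\<lambda>x. \<not> (\<Sum>i<N. \<bar>local_field p N J x i\<bar>) \<ge> d * real N)
      \<le> (\<Sum>x\<in>spins N. exp (\<beta> * (d * real N)) / (2 ^ N * ?Z))"
    unfolding gibbs_prob_eq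
  proof (rule sum_mono)
    fix x assume x: "x \<in> spins N"
    have "gibbs p N J \<beta> x \<le> exp (\<beta> * (d * real N)) / (2 ^ N * ?Z)"
      if "\<not> (\<Sum>i<N. \<bar>local_field p N J x i\<bar>) \<ge> d * real N"
      using that hamiltonian_le_sum_abs_local_field[OF x] partition_fn_pos[of p N J \<beta>] assms
      unfolding gibbs_def by (intro divide_right_mono) (auto intro: mult_left_mono)
    then show "(if \<not> (\<Sum>i<N. \<bar>local_field p N J x i\<bar>) \<ge> d * real N then gibbs p N J \<beta> x else 0)
        \<le> exp (\<beta> * (d * real N)) / (2 ^ N * ?Z)"
      using partition_fn_pos[of p N J \<beta>] by simp
  qed
  also have "\<dots> = exp (\<beta> * d * real N - free_energy p N J \<beta>)"
    unfolding free_energy_def using card_spins[of N] partition_fn_pos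
    by (simp add: exp_diff mult.assoc)
  finally show ?thesis .
qed

end

lemma one_minus_tanh_sq_eq: "1 - tanh z ^ 2 = 4 / (exp z + exp (- z))\<^sup>2" for z :: real
proof -
  define a where "a = exp z"
  define b where "b = exp (- z)"
  have "a + b > 0" "a * b = 1"
    unfolding a_def b_def by (simp_all add: add_pos_pos flip: exp_add)
  moreover have "1 - ((a - b) / (a + b))\<^sup>2 = ((a + b)\<^sup>2 - (a - b)\<^sup>2) / (a + b)\<^sup>2"
    using \<open>a + b > 0\<close> by (simp add: field_simps)
  moreover have "(a + b)\<^sup>2 - (a - b)\<^sup>2 = 4 * (a * b)"
    by (simp add: power2_eq_square algebra_simps)
  ultimately show ?thesis
    unfolding tanh_altdef a_def[symmetric] b_def[symmetric] by simp
qed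

lemma one_minus_tanh_sq_nonneg: "0 \<le> 1 - tanh z ^ 2" for z :: real
  using tanh_real_bounds[of z] by (simp add: abs_square_le_1 abs_le_iff)

lemma abs_mult_one_minus_tanh_sq_le: "\<bar>z\<bar> * (1 - tanh z ^ 2) \<le> 2" for z :: real
proof -
  define s where "s = exp z + exp (- z)"
  have "1 + z \<le> exp z" "1 + (-z) \<le> exp (-z)" "0 < exp z" "0 < exp (-z)"
    using exp_ge_add_one_self[of z] exp_ge_add_one_self[of "- z"] by auto
  then have "s \<ge> 2" "s \<ge> 1 + \<bar>z\<bar>" unfolding s_def by linarith+
  then have "s\<^sup>2 \<ge> 2 * (1 + \<bar>z\<bar>)"
    unfolding power2_eq_square by (intro mult_mono) auto
  then have "\<bar>z\<bar> * (4 / s\<^sup>2) \<le> 2" using \<open>s \<ge> 2\<close> by (simp add: field_simps)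
  then show ?thesis unfolding one_minus_tanh_sq_eq s_def .
qed

lemma tanh_diff_ge:
  fixes u v :: real
  assumes "0 \<le> u" "u \<le> v"
  shows "tanh v - tanh u \<ge> (v - u) * (1 - tanh v ^ 2)"
proof (cases "u = v")
  case False
  then have "u < v" using assms by simp
  then have "\<exists>z. u < z \<and> z < v \<and> tanh v - tanh u = (v - u) * (1 - tanh z ^ 2)"
    by (intro MVT2) (auto intro!: derivative_eq_intros)
  then obtain z where z: "u < z" "z < v" "tanh v - tanh u = (v - u) * (1 - tanh z ^ 2)"
    by blast
  then have "tanh z ^ 2 \<le> tanh v ^ 2" using assms by (intro power_mono) auto
  then show ?thesis unfolding z(3) using \<open>u < v\<close> by (intro mult_left_mono) auto
qed simp

text \<open>\<open>psi c\<close> is the summand \<open>y tanh(cy)\<close> of the estimating function, seen as a function of the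
  local field \<open>y\<close>; \<open>psi' c\<close> and \<open>psi'' c\<close> are its first two derivatives.\<close>

definition psi :: "real \<Rightarrow> real \<Rightarrow> real" where
  "psi c y = y * tanh (c * y)"

definition psi' :: "real \<Rightarrow> real \<Rightarrow> real" where
  "psi' c y = tanh (c * y) + c * y * (1 - tanh (c * y) ^ 2)"

definition psi'' :: "real \<Rightarrow> real \<Rightarrow> real" where
  "psi'' c y = 2 * c * (1 - tanh (c * y) ^ 2) * (1 - c * y * tanh (c * y))"

lemma has_field_derivative_psi': "(psi' c has_field_derivative psi'' c y) (at y)"
  unfolding psi'_def psi''_def
  by (auto intro!: derivative_eq_intros simp: algebra_simps power2_eq_square)

lemma abs_psi'_le: "\<bar>psi' c y\<bar> \<le> 3"
proof -
  have "\<bar>tanh (c * y)\<bar> \<le> 1"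
    using tanh_real_bounds[of "c * y"] by auto
  moreover have "\<bar>c * y * (1 - tanh (c * y) ^ 2)\<bar> \<le> 2"
    using abs_mult_one_minus_tanh_sq_le[of "c * y"] one_minus_tanh_sq_nonneg[of "c * y"]
    by (simp add: abs_mult)
  ultimately show ?thesis unfolding psi'_def by linarith
qed

lemma abs_psi''_le:
  assumes "c \<ge> 0"
  shows "\<bar>psi'' c y\<bar> \<le> 6 * c"
proof -
  let ?T = "tanh (c * y)" and ?S = "1 - tanh (c * y) ^ 2"
  have T: "\<bar>?T\<bar> \<le> 1" using tanh_real_bounds[of "c * y"] by auto
  have S: "0 \<le> ?S" "?S \<le> 1" using one_minus_tanh_sq_nonneg by auto
  have L: "\<bar>c * y\<bar> * ?S \<le> 2" by (rule abs_mult_one_minus_tanh_sq_le)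
  have "\<bar>1 - c * y * ?T\<bar> \<le> 1 + \<bar>c * y\<bar> * \<bar>?T\<bar>"
    using abs_triangle_ineq4[of 1 "c * y * ?T"] by (simp add: abs_mult)
  then have "\<bar>?S * (1 - c * y * ?T)\<bar> \<le> ?S * (1 + \<bar>c * y\<bar> * \<bar>?T\<bar>)"
    using S by (simp add: abs_mult mult_left_mono)
  also have "\<dots> = ?S + \<bar>c * y\<bar> * ?S * \<bar>?T\<bar>" by (simp add: algebra_simps)
  also have "\<dots> \<le> 1 + 2 * 1"
    using S L T by (intro add_mono mult_mono) auto
  finally have "c * \<bar>?S * (1 - c * y * ?T)\<bar> \<le> c * 3"
    using assms by (intro mult_left_mono) auto
  moreover have "psi'' c y = 2 * (c * (?S * (1 - c * y * ?T)))"
    unfolding psi''_def by (simp add: mult_ac)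
  ultimately show ?thesis using assms by (simp add: abs_mult mult_ac)
qed

lemma psi_taylor_remainder:
  assumes "c \<ge> 0"
  shows "\<bar>psi c y - psi c (y - d) - psi' c y * d\<bar> \<le> 6 * c * d\<^sup>2"
proof -
  define g where "g t = psi c y - psi c (y - t) - psi' c y * t" for t
  define g' where "g' t = psi' c (y - t) - psi' c y" for t
  let ?S = "{min 0 d .. max 0 d}"
  have "(g has_field_derivative g' t) (at t within ?S)" for t
  proof -
    have "((\<lambda>t. psi c (y - t)) has_field_derivative psi' c (y - t) * (-1)) (at t)"
      unfolding psi_def psi'_def by (auto intro!: derivative_eq_intros simp: algebra_simps)
    then have "(g has_field_derivative g' t) (at t)"
      unfolding g_def g'_def by (auto intro!: derivative_eq_intros)
    then show ?thesis by (rule has_field_derivative_at_within)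
  qed
  moreover have "norm (g' t) \<le> 6 * c * \<bar>d\<bar>" if "t \<in> ?S" for t
  proof -
    have "\<bar>psi' c (y - t) - psi' c y\<bar> \<le> 6 * c * \<bar>(y - t) - y\<bar>"
      using field_differentiable_bound[of UNIV "psi' c" "psi'' c" "6 * c" "y - t" y]
        has_field_derivative_psi' abs_psi''_le[OF assms] by auto
    also have "\<dots> \<le> 6 * c * \<bar>d\<bar>" using that assms by (intro mult_left_mono) auto
    finally show ?thesis unfolding g'_def by simp
  qed
  ultimately have "norm (g d - g 0) \<le> 6 * c * \<bar>d\<bar> * norm (d - 0)"
    by (intro field_differentiable_bound[of ?S g g']) auto
  then show ?thesis unfolding g_def by (simp add: power2_eq_square)
qed

lemma power_le_one_plus_power:
  fixes y :: real
  assumes "y \<ge> 0" "k \<le> n"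
  shows "y ^ k \<le> 1 + y ^ n"
proof (cases "y \<le> 1")
  case True
  then show ?thesis using assms by (simp add: power_le_one add_increasing2)
next
  case False
  then have "y ^ k \<le> y ^ n" using assms by (intro power_increasing) auto
  then show ?thesis by simp
qed

section \<open>The operator norm\<close>

lemma op_norm_bdd_above:
  fixes A :: "nat \<Rightarrow> nat \<Rightarrow> real"
  shows "bdd_above ((\<lambda>v. sqrt (\<Sum>i<N. (\<Sum>j<N. A i j * v j)\<^sup>2)) ` {v. (\<Sum>j<N. (v j)\<^sup>2) \<le> 1})"
proof (rule bdd_aboveI2)
  fix v :: "nat \<Rightarrow> real" assume v: "v \<in> {v. (\<Sum>j<N. (v j)\<^sup>2) \<le> 1}"
  have "\<bar>v j\<bar> \<le> 1" if "j < N" for j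
  proof -
    have "(v j)\<^sup>2 \<le> (\<Sum>j<N. (v j)\<^sup>2)" using that by (intro member_le_sum) auto
    then have "(v j)\<^sup>2 \<le> 1" using v by simp
    then show ?thesis by (simp add: abs_square_le_1)
  qed
  then have "\<bar>\<Sum>j<N. A i j * v j\<bar> \<le> (\<Sum>j<N. \<bar>A i j\<bar>)" for i
    by (intro order_trans[OF sum_abs] sum_mono) (auto simp: abs_mult intro: mult_left_le)
  then have "(\<Sum>j<N. A i j * v j)\<^sup>2 \<le> (\<Sum>j<N. \<bar>A i j\<bar>)\<^sup>2" for i
    by (metis abs_le_square_iff abs_of_nonneg order_trans abs_ge_zero sum_nonneg)
  then show "sqrt (\<Sum>i<N. (\<Sum>j<N. A i j * v j)\<^sup>2) \<le> sqrt (\<Sum>i<N. (\<Sum>j<N. \<bar>A i j\<bar>)\<^sup>2)"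
    by (intro real_sqrt_le_mono sum_mono)
qed

lemma op_norm_upper:
  "(\<Sum>j<N. (v j)\<^sup>2) \<le> 1 \<Longrightarrow> sqrt (\<Sum>i<N. (\<Sum>j<N. A i j * v j)\<^sup>2) \<le> op_norm N A"
  unfolding op_norm_def by (rule cSUP_upper[OF _ op_norm_bdd_above]) simp

lemma op_norm_nonneg: "op_norm N A \<ge> 0"
  using op_norm_upper[where v = "\<lambda>_. 0" and N = N and A = A] by simp

lemma sum_sq_mat_vec_le:
  "(\<Sum>i<N. (\<Sum>j<N. A i j * v j)\<^sup>2) \<le> (op_norm N A)\<^sup>2 * (\<Sum>j<N. (v j)\<^sup>2)"
proof (cases "(\<Sum>j<N. (v j)\<^sup>2) = 0")
  case True
  then have "\<forall>j\<in>{..<N}. v j = 0" by (simp add: sum_nonneg_eq_0_iff)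
  then show ?thesis using True by simp
next
  case False
  define s where "s = (\<Sum>j<N. (v j)\<^sup>2)"
  have s: "s > 0" using False unfolding s_def by (simp add: order_less_le sum_nonneg)
  define u where "u j = v j / sqrt s" for j
  have "(\<Sum>j<N. (u j)\<^sup>2) = 1"
    unfolding u_def using s by (simp add: power_divide sum_divide_distrib[symmetric] s_def)
  then have "sqrt (\<Sum>i<N. (\<Sum>j<N. A i j * u j)\<^sup>2) \<le> op_norm N A"
    by (intro op_norm_upper) simp
  moreover have "(\<Sum>i<N. (\<Sum>j<N. A i j * u j)\<^sup>2) = (\<Sum>i<N. (\<Sum>j<N. A i j * v j)\<^sup>2) / s"
    unfolding u_def using s
    by (simp add: sum_divide_distrib[symmetric] power_divide times_divide_eq_right)
  ultimately have "(\<Sum>i<N. (\<Sum>j<N. A i j * v j)\<^sup>2) / s \<le> (op_norm N A)\<^sup>2"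
    by (metis real_sqrt_le_iff real_sqrt_pow2_iff sqrt_le_D)
  then show ?thesis unfolding s_def[symmetric] using s by (simp add: field_simps)
qed

lemma sum_sq_column_le_op_norm:
  assumes "j < N"
  shows "(\<Sum>i<N. (A i j)\<^sup>2) \<le> (op_norm N A)\<^sup>2"
proof -
  define e :: "nat \<Rightarrow> real" where "e k = (if k = j then 1 else 0)" for k
  have "(\<Sum>k<N. (e k)\<^sup>2) = (\<Sum>k<N. e k)"
    unfolding e_def by (rule sum.cong) auto
  then have "(\<Sum>k<N. (e k)\<^sup>2) = 1"
    using assms unfolding e_def by simp
  moreover have "(\<Sum>k<N. A i k * e k) = A i j" for i
    using assms unfolding e_def by (simp add: if_distrib cong: if_cong)
  ultimately show ?thesis
    using sum_sq_mat_vec_le[where N = N and A = A and v = e] by simp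
qed

lemma abs_bilinear_le_op_norm:
  "\<bar>\<Sum>i<N. \<Sum>j<N. b i * A i j * a j\<bar>
     \<le> op_norm N A * sqrt (\<Sum>i<N. (b i)\<^sup>2) * sqrt (\<Sum>j<N. (a j)\<^sup>2)"
proof -
  define w where "w i = (\<Sum>j<N. A i j * a j)" for i
  have "(\<Sum>i<N. b i * w i)\<^sup>2 \<le> (\<Sum>i<N. (b i)\<^sup>2) * (\<Sum>i<N. (w i)\<^sup>2)"
    by (rule Cauchy_Schwarz_ineq_sum)
  also have "\<dots> \<le> (\<Sum>i<N. (b i)\<^sup>2) * ((op_norm N A)\<^sup>2 * (\<Sum>j<N. (a j)\<^sup>2))"
    unfolding w_def by (intro mult_left_mono sum_sq_mat_vec_le) (auto intro: sum_nonneg)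
  also have "\<dots> = (op_norm N A * sqrt (\<Sum>i<N. (b i)\<^sup>2) * sqrt (\<Sum>j<N. (a j)\<^sup>2))\<^sup>2"
    by (simp add: power_mult_distrib sum_nonneg)
  finally have "\<bar>\<Sum>i<N. b i * w i\<bar>
      \<le> \<bar>op_norm N A * sqrt (\<Sum>i<N. (b i)\<^sup>2) * sqrt (\<Sum>j<N. (a j)\<^sup>2)\<bar>"
    by (simp only: abs_le_square_iff)
  then have "\<bar>\<Sum>i<N. b i * w i\<bar> \<le> op_norm N A * sqrt (\<Sum>i<N. (b i)\<^sup>2) * sqrt (\<Sum>j<N. (a j)\<^sup>2)"
    using op_norm_nonneg[where N = N and A = A] by (simp add: abs_mult sum_nonneg)
  moreover have "(\<Sum>i<N. \<Sum>j<N. b i * A i j * a j) = (\<Sum>i<N. b i * w i)"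
    unfolding w_def by (simp add: sum_distrib_left mult.assoc)
  ultimately show ?thesis by simp
qed

lemma sum_abs_le_sqrt_card:
  "(\<Sum>i<N. \<bar>f i\<bar>) \<le> sqrt (real N) * sqrt (\<Sum>i<N. (f i)\<^sup>2)"
proof -
  have "(\<Sum>i<N. 1 * \<bar>f i\<bar>)\<^sup>2 \<le> (\<Sum>i<N. 1\<^sup>2) * (\<Sum>i<N. \<bar>f i\<bar>\<^sup>2)"
    by (rule Cauchy_Schwarz_ineq_sum)
  then have "(\<Sum>i<N. \<bar>f i\<bar>) \<le> sqrt (real N * (\<Sum>i<N. (f i)\<^sup>2))"
    by (simp add: real_le_rsqrt)
  then show ?thesis by (simp add: real_sqrt_mult)
qed

section \<open>The second moment of the pseudo-likelihood score\<close>

definition pl_score_term :: "nat \<Rightarrow> nat \<Rightarrow> (nat list \<Rightarrow> real) \<Rightarrow> real \<Rightarrow> (nat \<Rightarrow> real) \<Rightarrow> nat \<Rightarrow> real" where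
  "pl_score_term p N J \<beta> x i =
     local_field p N J x i * (x i - tanh (real p * \<beta> * local_field p N J x i))"

locale ising_model =
  fixes p N :: nat and J :: "nat list \<Rightarrow> real" and \<beta> :: real
  assumes v: "valid_tensor p N J" and p2: "p \<ge> 2" and \<beta>: "\<beta> \<ge> 0"
begin

abbreviation "m x i \<equiv> local_field p N J x i"
abbreviation "Jx x \<equiv> local_matrix p N J x"
abbreviation "nrm x \<equiv> op_norm N (local_matrix p N J x)"
abbreviation "p\<beta> \<equiv> real p * \<beta>"
abbreviation "res x i \<equiv> x i - tanh (p\<beta> * m x i)"
abbreviation "U x i \<equiv> pl_score_term p N J \<beta> x i"
abbreviation "\<E> f \<equiv> gibbs_expect p N J \<beta> f"

text \<open>Flipping \<open>x\<^sub>j\<close> shifts \<open>m\<^sub>i\<close> by \<open>2(p-1)x\<^sub>jJ\<^sub>i\<^sub>j(x)\<close>; this is the second order Taylor remainder of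
  \<open>psi\<close> along that shift.\<close>

abbreviation "flip_rem x i j \<equiv>
  psi p\<beta> (m x i) - psi p\<beta> (m x i - 2 * (real p - 1) * x j * Jx x i j)
    - psi' p\<beta> (m x i) * (2 * (real p - 1) * x j * Jx x i j)"

lemma abs_res_le: "x \<in> spins N \<Longrightarrow> i < N \<Longrightarrow> \<bar>res x i\<bar> \<le> 2"
  using abs_spin[of x N i] tanh_real_bounds[of "p\<beta> * m x i"] by auto

lemma sum_sq_local_field_le: "x \<in> spins N \<Longrightarrow> (\<Sum>i<N. (m x i)\<^sup>2) \<le> (nrm x)\<^sup>2 * real N"
  using sum_sq_mat_vec_le[where A = "Jx x" and v = x and N = N]
  by (simp add: local_field_eq_sum_local_matrix[OF v p2] mult.commute spin_square)

lemma sum_sq_pl_score_term_le: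
  assumes x: "x \<in> spins N"
  shows "(\<Sum>i<N. (U x i)\<^sup>2) \<le> 4 * (nrm x)\<^sup>2 * real N"
proof -
  have "(U x i)\<^sup>2 \<le> 4 * (m x i)\<^sup>2" if "i < N" for i
  proof -
    have "(res x i)\<^sup>2 \<le> 2\<^sup>2"
      using abs_res_le[OF x that] by (metis abs_le_square_iff abs_numeral)
    from mult_left_mono[OF this zero_le_power2[of "m x i"]] show ?thesis
      unfolding pl_score_term_def power_mult_distrib by (simp add: mult.commute)
  qed
  then have "(\<Sum>i<N. (U x i)\<^sup>2) \<le> 4 * (\<Sum>i<N. (m x i)\<^sup>2)"
    unfolding sum_distrib_left by (intro sum_mono) simp
  also have "\<dots> \<le> 4 * ((nrm x)\<^sup>2 * real N)"
    using sum_sq_local_field_le[OF x] by simp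
  finally show ?thesis by simp
qed

text \<open>The part of \<open>U\<^sub>i\<close> that is even under the flip at \<open>j\<close> is orthogonal to \<open>res\<^sub>j\<close>, so only the
  odd part \<open>(U\<^sub>i - U\<^sub>i \<circ> flip\<^sub>j)/2\<close> contributes to \<open>\<bbbE>U\<^sub>iU\<^sub>j\<close>; expanding it gives a bilinear
  form in \<open>J(x)\<close> plus the remainder of order \<open>J\<^sub>i\<^sub>j(x)\<^sup>2\<close>.\<close>

lemma gibbs_expect_cross_score:
  assumes i: "i < N" and j: "j < N" and ij: "i \<noteq> j"
  shows "\<E> (\<lambda>x. U x i * U x j) = \<E> (\<lambda>x. (x i - psi' p\<beta> (m x i)) * Jx x i j
      * ((real p - 1) * res x j * m x j * x j) - res x j * m x j * flip_rem x i j / 2)"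
proof -
  define g where "g x = m x j * (U x i + U (spin_flip x j) i) / 2" for x
  have "g (spin_flip x j) = g x" for x
    unfolding g_def using local_field_flip_same[OF v p2 j] by (simp add: add.commute)
  then have orth: "\<E> (\<lambda>x. res x j * g x) = 0"
    by (intro gibbs_expect_residual_orthogonal[OF v p2 j])
  have diff: "U x i - U (spin_flip x j) i
      = 2 * (real p - 1) * x j * Jx x i j * (x i - psi' p\<beta> (m x i)) - flip_rem x i j" for x
  proof -
    have flip: "m (spin_flip x j) i = m x i - 2 * (real p - 1) * x j * Jx x i j"
      using local_field_flip_diff[OF v p2 i j, of x] by simp
    show ?thesis
      unfolding pl_score_term_def psi_def flip spin_flip_other[OF ij] by (simp add: algebra_simps)
  qed
  have split: "U x i * U x j = (x i - psi' p\<beta> (m x i)) * Jx x i j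
      * ((real p - 1) * res x j * m x j * x j) - res x j * m x j * flip_rem x i j / 2
      + res x j * g x" for x
  proof -
    have ring: "r * n * (2 * q * y * a * b - R) / 2 + r * h = b * a * (q * r * n * y) - r * n * R / 2 + r * h"
      for r n q y a b R h :: real
      by (simp add: field_simps)
    have "U x i * U x j = res x j * m x j * (U x i - U (spin_flip x j) i) / 2 + res x j * g x"
      unfolding g_def pl_score_term_def[of p N J \<beta> x j] by (simp add: field_simps)
    also have "\<dots> = (x i - psi' p\<beta> (m x i)) * Jx x i j
      * ((real p - 1) * res x j * m x j * x j) - res x j * m x j * flip_rem x i j / 2
      + res x j * g x"
      unfolding diff by (rule ring)
    finally show ?thesis .
  qed
  show ?thesis
    unfolding split gibbs_expect_add orth by simp
qed

lemma abs_sum_cross_bilinear_le: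
  assumes x: "x \<in> spins N"
  shows "\<bar>\<Sum>i<N. \<Sum>j<N. (x i - psi' p\<beta> (m x i)) * Jx x i j * ((real p - 1) * res x j * m x j * x j)\<bar>
     \<le> real N * (8 * (real p - 1) * (nrm x)\<^sup>2)"
proof -
  define a where "a j = (real p - 1) * res x j * m x j * x j" for j
  define b where "b i = x i - psi' p\<beta> (m x i)" for i
  have "(\<Sum>i<N. (b i)\<^sup>2) \<le> 4\<^sup>2 * real N"
  proof -
    have "\<bar>b i\<bar> \<le> 4" if "i < N" for i
      unfolding b_def using abs_spin[OF x that] abs_psi'_le[of "p\<beta>" "m x i"] by linarith
    then have "(b i)\<^sup>2 \<le> 4\<^sup>2" if "i < N" for i
      using that by (metis abs_le_square_iff abs_numeral)
    then show ?thesis using sum_mono[of "{..<N}" "\<lambda>i. (b i)\<^sup>2" "\<lambda>_. 4\<^sup>2"] by simp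
  qed
  moreover have "(\<Sum>j<N. (a j)\<^sup>2) \<le> (2 * (real p - 1) * nrm x)\<^sup>2 * real N"
  proof -
    have "(a j)\<^sup>2 \<le> 4 * (real p - 1)\<^sup>2 * (m x j)\<^sup>2" if "j < N" for j
    proof -
      have "(res x j)\<^sup>2 \<le> 2\<^sup>2"
        using abs_res_le[OF x that] by (metis abs_le_square_iff abs_numeral)
      then have "(res x j)\<^sup>2 * ((real p - 1)\<^sup>2 * (m x j)\<^sup>2) \<le> 4 * ((real p - 1)\<^sup>2 * (m x j)\<^sup>2)"
        by (intro mult_right_mono) auto
      then show ?thesis
        unfolding a_def power_mult_distrib spin_square[OF x that] by (simp add: mult_ac)
    qed
    then have "(\<Sum>j<N. (a j)\<^sup>2) \<le> 4 * (real p - 1)\<^sup>2 * (\<Sum>j<N. (m x j)\<^sup>2)"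
      unfolding sum_distrib_left by (intro sum_mono) simp
    also have "\<dots> \<le> 4 * (real p - 1)\<^sup>2 * ((nrm x)\<^sup>2 * real N)"
      by (intro mult_left_mono sum_sq_local_field_le[OF x]) auto
    also have "\<dots> = (2 * (real p - 1) * nrm x)\<^sup>2 * real N"
      unfolding power_mult_distrib by simp
    finally show ?thesis .
  qed
  moreover have "nrm x \<ge> 0" "real p - 1 \<ge> 0" using op_norm_nonneg p2 by auto
  ultimately have "nrm x * sqrt (\<Sum>i<N. (b i)\<^sup>2) * sqrt (\<Sum>j<N. (a j)\<^sup>2)
      \<le> nrm x * (4 * sqrt (real N)) * ((2 * (real p - 1) * nrm x) * sqrt (real N))"
    by (intro mult_mono) (auto simp: real_sqrt_mult sum_nonneg intro: real_sqrt_le_mono[THEN order_trans])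
  also have "\<dots> = 8 * (real p - 1) * (nrm x)\<^sup>2 * (sqrt (real N) * sqrt (real N))"
    by (simp add: power2_eq_square mult_ac)
  also have "\<dots> = real N * (8 * (real p - 1) * (nrm x)\<^sup>2)"
    by simp
  finally show ?thesis
    using abs_bilinear_le_op_norm[where N = N and A = "Jx x" and a = a and b = b]
    unfolding a_def b_def by linarith
qed

lemma sum_abs_cross_remainder_le:
  assumes x: "x \<in> spins N"
  shows "(\<Sum>i<N. \<Sum>j<N. \<bar>res x j * m x j * flip_rem x i j / 2\<bar>)
     \<le> real N * (24 * p\<beta> * (real p - 1)\<^sup>2 * (nrm x) ^ 3)"
proof -
  have p\<beta>_nonneg: "p\<beta> \<ge> 0" using \<beta> by simp
  have "\<bar>res x j * m x j * flip_rem x i j / 2\<bar> \<le> 24 * p\<beta> * (real p - 1)\<^sup>2 * (\<bar>m x j\<bar> * (Jx x i j)\<^sup>2)"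
    if "j < N" for i j
  proof -
    have "\<bar>flip_rem x i j\<bar> \<le> 6 * p\<beta> * (2 * (real p - 1) * x j * Jx x i j)\<^sup>2"
      by (rule psi_taylor_remainder[OF p\<beta>_nonneg])
    also have "\<dots> = 6 * p\<beta> * ((2 * (real p - 1))\<^sup>2 * (x j)\<^sup>2 * (Jx x i j)\<^sup>2)"
      by (simp only: power_mult_distrib)
    also have "\<dots> = 24 * p\<beta> * (real p - 1)\<^sup>2 * (Jx x i j)\<^sup>2"
      unfolding spin_square[OF x that] power_mult_distrib by (simp add: mult_ac)
    finally have rem: "\<bar>flip_rem x i j\<bar> \<le> 24 * p\<beta> * (real p - 1)\<^sup>2 * (Jx x i j)\<^sup>2" .
    have "\<bar>res x j * m x j * flip_rem x i j / 2\<bar> = \<bar>res x j\<bar> * (\<bar>m x j\<bar> * \<bar>flip_rem x i j\<bar>) / 2"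
      by (simp add: abs_mult)
    also have "\<dots> \<le> 2 * (\<bar>m x j\<bar> * (24 * p\<beta> * (real p - 1)\<^sup>2 * (Jx x i j)\<^sup>2)) / 2"
      using abs_res_le[OF x that] rem by (intro divide_right_mono mult_mono mult_left_mono) auto
    finally show ?thesis by (simp add: mult_ac)
  qed
  then have "(\<Sum>i<N. \<Sum>j<N. \<bar>res x j * m x j * flip_rem x i j / 2\<bar>)
      \<le> (\<Sum>i<N. \<Sum>j<N. 24 * p\<beta> * (real p - 1)\<^sup>2 * (\<bar>m x j\<bar> * (Jx x i j)\<^sup>2))"
    by (intro sum_mono) auto
  also have "\<dots> = 24 * p\<beta> * (real p - 1)\<^sup>2 * (\<Sum>j<N. \<bar>m x j\<bar> * (\<Sum>i<N. (Jx x i j)\<^sup>2))"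
    by (subst sum.swap) (simp add: sum_distrib_left)
  also have "\<dots> \<le> 24 * p\<beta> * (real p - 1)\<^sup>2 * (\<Sum>j<N. \<bar>m x j\<bar> * (nrm x)\<^sup>2)"
    using p\<beta>_nonneg sum_sq_column_le_op_norm by (intro mult_left_mono sum_mono) auto
  also have "\<dots> = 24 * p\<beta> * (real p - 1)\<^sup>2 * (nrm x)\<^sup>2 * (\<Sum>j<N. \<bar>m x j\<bar>)"
    by (simp add: sum_distrib_right mult_ac)
  also have "\<dots> \<le> 24 * p\<beta> * (real p - 1)\<^sup>2 * (nrm x)\<^sup>2 * (sqrt (real N) * (nrm x * sqrt (real N)))"
  proof (intro mult_left_mono)
    have "(\<Sum>j<N. \<bar>m x j\<bar>) \<le> sqrt (real N) * sqrt (\<Sum>j<N. (m x j)\<^sup>2)"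
      by (rule sum_abs_le_sqrt_card)
    also have "\<dots> \<le> sqrt (real N) * sqrt ((nrm x)\<^sup>2 * real N)"
      using sum_sq_local_field_le[OF x] by (intro mult_left_mono real_sqrt_le_mono) auto
    finally show "(\<Sum>j<N. \<bar>m x j\<bar>) \<le> sqrt (real N) * (nrm x * sqrt (real N))"
      using op_norm_nonneg by (simp add: real_sqrt_mult)
  qed (use p\<beta>_nonneg in auto)
  also have "\<dots> = real N * (24 * p\<beta> * (real p - 1)\<^sup>2 * (nrm x) ^ 3)"
    by (simp add: power2_eq_square power3_eq_cube mult_ac)
  finally show ?thesis .
qed

lemma abs_sum_cross_le:
  assumes x: "x \<in> spins N"
  shows "\<bar>\<Sum>i<N. \<Sum>j\<in>{..<N}-{i}. (x i - psi' p\<beta> (m x i)) * Jx x i j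
      * ((real p - 1) * res x j * m x j * x j) - res x j * m x j * flip_rem x i j / 2\<bar>
     \<le> real N * (8 * (real p - 1) * (nrm x)\<^sup>2 + 24 * p\<beta> * (real p - 1)\<^sup>2 * (nrm x) ^ 3)"
    (is "\<bar>\<Sum>i<N. \<Sum>j\<in>{..<N}-{i}. ?B i j - ?R i j\<bar> \<le> _")
proof -
  have "(\<Sum>j\<in>{..<N}-{i}. ?B i j) = (\<Sum>j<N. ?B i j)" if "i < N" for i
    using sum.remove[of "{..<N}" i "?B i"] that local_matrix_diag[OF v p2 that, of x] by simp
  then have "(\<Sum>i<N. \<Sum>j\<in>{..<N}-{i}. ?B i j - ?R i j)
      = (\<Sum>i<N. \<Sum>j<N. ?B i j) - (\<Sum>i<N. \<Sum>j\<in>{..<N}-{i}. ?R i j)"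
    by (simp add: sum_subtractf)
  moreover have "\<bar>\<Sum>i<N. \<Sum>j\<in>{..<N}-{i}. ?R i j\<bar> \<le> (\<Sum>i<N. \<Sum>j<N. \<bar>?R i j\<bar>)"
    by (intro order_trans[OF sum_abs] sum_mono order_trans[OF sum_abs] sum_mono2) auto
  ultimately show ?thesis
    using abs_sum_cross_bilinear_le[OF x] sum_abs_cross_remainder_le[OF x] by (simp add: algebra_simps)
qed

lemma gibbs_expect_pl_score_sq_le:
  "\<E> (\<lambda>x. (\<Sum>i<N. U x i)\<^sup>2)
     \<le> real N * (4 + 8 * (real p - 1) + 24 * p\<beta> * (real p - 1)\<^sup>2) * \<E> (\<lambda>x. 1 + (nrm x) ^ 4)"
proof -
  let ?cross = "\<lambda>x i j. (x i - psi' p\<beta> (m x i)) * Jx x i j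
      * ((real p - 1) * res x j * m x j * x j) - res x j * m x j * flip_rem x i j / 2"
  have "(\<Sum>i<N. U x i)\<^sup>2 = (\<Sum>i<N. (U x i)\<^sup>2 + (\<Sum>j\<in>{..<N}-{i}. U x i * U x j))" for x
    unfolding power2_eq_square sum_product
    by (intro sum.cong refl) (simp add: sum.remove[of "{..<N}"])
  then have "\<E> (\<lambda>x. (\<Sum>i<N. U x i)\<^sup>2)
      = (\<Sum>i<N. \<E> (\<lambda>x. (U x i)\<^sup>2) + (\<Sum>j\<in>{..<N}-{i}. \<E> (\<lambda>x. U x i * U x j)))"
    by (simp add: gibbs_expect_sum gibbs_expect_add)
  also have "\<dots> = (\<Sum>i<N. \<E> (\<lambda>x. (U x i)\<^sup>2) + (\<Sum>j\<in>{..<N}-{i}. \<E> (\<lambda>x. ?cross x i j)))"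
    by (intro sum.cong refl arg_cong2[where f = "(+)"] gibbs_expect_cross_score) auto
  also have "\<dots> = \<E> (\<lambda>x. (\<Sum>i<N. (U x i)\<^sup>2) + (\<Sum>i<N. \<Sum>j\<in>{..<N}-{i}. ?cross x i j))"
    by (simp add: gibbs_expect_sum gibbs_expect_add sum.distrib)
  also have "\<dots> \<le> \<E> (\<lambda>x. real N * (4 + 8 * (real p - 1) + 24 * p\<beta> * (real p - 1)\<^sup>2) * (1 + (nrm x) ^ 4))"
  proof (rule gibbs_expect_mono)
    fix x assume x: "x \<in> spins N"
    have "nrm x \<ge> 0" by (rule op_norm_nonneg)
    then have "(nrm x)\<^sup>2 \<le> 1 + (nrm x) ^ 4" "(nrm x) ^ 3 \<le> 1 + (nrm x) ^ 4"
      by (simp_all add: power_le_one_plus_power)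
    moreover have "real p - 1 \<ge> 0" "p\<beta> \<ge> 0" using p2 \<beta> by auto
    ultimately have "4 * (nrm x)\<^sup>2 + (8 * (real p - 1) * (nrm x)\<^sup>2 + 24 * p\<beta> * (real p - 1)\<^sup>2 * (nrm x) ^ 3)
        \<le> 4 * (1 + (nrm x) ^ 4) + (8 * (real p - 1) * (1 + (nrm x) ^ 4)
          + 24 * p\<beta> * (real p - 1)\<^sup>2 * (1 + (nrm x) ^ 4))"
      by (intro add_mono mult_left_mono) auto
    then have "real N * (4 * (nrm x)\<^sup>2 + (8 * (real p - 1) * (nrm x)\<^sup>2 + 24 * p\<beta> * (real p - 1)\<^sup>2 * (nrm x) ^ 3))
        \<le> real N * (4 * (1 + (nrm x) ^ 4) + (8 * (real p - 1) * (1 + (nrm x) ^ 4)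
          + 24 * p\<beta> * (real p - 1)\<^sup>2 * (1 + (nrm x) ^ 4)))"
      by (intro mult_left_mono) auto
    also have "\<dots> = real N * (4 + 8 * (real p - 1) + 24 * p\<beta> * (real p - 1)\<^sup>2) * (1 + (nrm x) ^ 4)"
      by (simp only: distrib_right mult.assoc add.assoc)
    moreover have "(\<Sum>i<N. (U x i)\<^sup>2) + (\<Sum>i<N. \<Sum>j\<in>{..<N}-{i}. ?cross x i j)
        \<le> real N * (4 * (nrm x)\<^sup>2 + (8 * (real p - 1) * (nrm x)\<^sup>2 + 24 * p\<beta> * (real p - 1)\<^sup>2 * (nrm x) ^ 3))"
      using sum_sq_pl_score_term_le[OF x] abs_sum_cross_le[OF x]
      unfolding distrib_left abs_le_iff mult.commute[of "4 * (nrm x)\<^sup>2" "real N"] by linarith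
    ultimately show "(\<Sum>i<N. (U x i)\<^sup>2) + (\<Sum>i<N. \<Sum>j\<in>{..<N}-{i}. ?cross x i j)
        \<le> real N * (4 + 8 * (real p - 1) + 24 * p\<beta> * (real p - 1)\<^sup>2) * (1 + (nrm x) ^ 4)"
      by linarith
  qed
  also have "\<dots> = real N * (4 + 8 * (real p - 1) + 24 * p\<beta> * (real p - 1)\<^sup>2) * \<E> (\<lambda>x. 1 + (nrm x) ^ 4)"
    by (rule gibbs_expect_cmult)
  finally show ?thesis .
qed

end

section \<open>Localisation of the root of the estimating equation\<close>

definition estimating_fn :: "real \<Rightarrow> nat \<Rightarrow> (nat \<Rightarrow> real) \<Rightarrow> real \<Rightarrow> real" where
  "estimating_fn q N m b = (\<Sum>i<N. m i * tanh (q * b * m i))"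

lemma mpl_estimate_eq:
  "mpl_estimate p N J x = Inf (ereal ` {b. b \<ge> 0 \<and>
     hamiltonian p N J x = estimating_fn (real p) N (local_field p N J x) b})"
  unfolding mpl_estimate_def estimating_fn_def ..

lemma mult_tanh_mono:
  fixes m a b q :: real
  assumes "a \<le> b" "q \<ge> 0"
  shows "m * tanh (q * a * m) \<le> m * tanh (q * b * m)"
proof (cases "m \<ge> 0")
  case True
  then have "q * a * m \<le> q * b * m"
    using assms by (intro mult_right_mono mult_left_mono) auto
  then show ?thesis using True by (intro mult_left_mono) auto
next
  case False
  then have "q * b * m \<le> q * a * m"
    using assms by (intro mult_right_mono_neg mult_left_mono) auto
  then show ?thesis using False by (intro mult_left_mono_neg) auto
qed

lemma estimating_fn_mono: "q \<ge> 0 \<Longrightarrow> mono (estimating_fn q N m)"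
  unfolding estimating_fn_def mono_def by (auto intro: sum_mono mult_tanh_mono)

lemma mult_tanh_diff_ge:
  fixes m a b q B K :: real
  assumes b: "0 \<le> a" "a \<le> b" "b \<le> B" and q: "q \<ge> 0" and K: "\<bar>m\<bar> \<le> K"
  shows "m * tanh (q * b * m) - m * tanh (q * a * m) \<ge> (b - a) * q * (1 - tanh (q * B * K) ^ 2) * m\<^sup>2"
proof -
  let ?u = "q * a * \<bar>m\<bar>" and ?v = "q * b * \<bar>m\<bar>" and ?s = "1 - tanh (q * B * K) ^ 2"
  have uv: "0 \<le> ?u" "?u \<le> ?v" using b q by (auto intro!: mult_right_mono mult_left_mono)
  have "?v \<le> q * B * K" using b q K by (intro mult_mono) (auto intro: mult_left_mono)
  then have "tanh ?v ^ 2 \<le> tanh (q * B * K) ^ 2"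
    using uv by (intro power_mono) auto
  then have "(?v - ?u) * ?s \<le> (?v - ?u) * (1 - tanh ?v ^ 2)"
    using uv by (intro mult_left_mono) auto
  also have "\<dots> \<le> tanh ?v - tanh ?u" by (rule tanh_diff_ge[OF uv])
  finally have gain: "\<bar>m\<bar> * ((?v - ?u) * ?s) \<le> \<bar>m\<bar> * (tanh ?v - tanh ?u)"
    by (intro mult_left_mono) auto
  have odd: "m * tanh (t * m) = \<bar>m\<bar> * tanh (t * \<bar>m\<bar>)" for t
    by (cases "m \<ge> 0") auto
  have ring: "t * ((q * b * t - q * a * t) * ?s) = (b - a) * q * ?s * (t * t)" for t
    by (simp add: algebra_simps)
  have "\<bar>m\<bar> * ((?v - ?u) * ?s) = (b - a) * q * ?s * (\<bar>m\<bar> * \<bar>m\<bar>)"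
    by (rule ring)
  also have "\<bar>m\<bar> * \<bar>m\<bar> = m\<^sup>2"
    by (simp add: power2_eq_square)
  finally have "\<bar>m\<bar> * ((?v - ?u) * ?s) = (b - a) * q * ?s * m\<^sup>2" .
  moreover have "m * tanh (q * b * m) - m * tanh (q * a * m) = \<bar>m\<bar> * (tanh ?v - tanh ?u)"
    unfolding odd right_diff_distrib ..
  ultimately show ?thesis using gain by linarith
qed

lemma estimating_fn_diff_ge:
  assumes "0 \<le> a" "a \<le> b" "b \<le> B" "q \<ge> 0"
  shows "estimating_fn q N m b - estimating_fn q N m a
     \<ge> (b - a) * q * (1 - tanh (q * B * K) ^ 2) * (\<Sum>i<N. if \<bar>m i\<bar> \<le> K then (m i)\<^sup>2 else 0)"
proof -
  have "(b - a) * q * (1 - tanh (q * B * K) ^ 2) * (if \<bar>m i\<bar> \<le> K then (m i)\<^sup>2 else 0)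
      \<le> m i * tanh (q * b * m i) - m i * tanh (q * a * m i)" for i
    using mult_tanh_diff_ge[OF assms, of "m i" K] mult_tanh_mono[OF assms(2,4), of "m i"] by auto
  then show ?thesis
    unfolding estimating_fn_def sum_distrib_left sum_subtractf[symmetric] by (rule sum_mono)
qed

text \<open>The fields are mostly bounded: by the second moment bound the fields above \<open>K\<close> carry at most
  half of \<open>\<Sum>\<^sub>i |m\<^sub>i|\<close>, and Cauchy--Schwarz turns the remaining half into a lower bound for the
  truncated second moment.\<close>

lemma sum_sq_truncated_ge:
  fixes m :: "nat \<Rightarrow> real"
  assumes L: "L > 0" and d: "d > 0"
    and sq: "(\<Sum>i<N. (m i)\<^sup>2) \<le> L\<^sup>2 * real N" and abs: "(\<Sum>i<N. \<bar>m i\<bar>) \<ge> d * real N"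
  shows "(\<Sum>i<N. if \<bar>m i\<bar> \<le> 2 * L\<^sup>2 / d then (m i)\<^sup>2 else 0) \<ge> d\<^sup>2 / 4 * real N"
proof -
  define K where "K = 2 * L\<^sup>2 / d"
  have K: "K > 0" unfolding K_def using L d by simp
  define f where "f i = (if \<bar>m i\<bar> \<le> K then m i else 0)" for i
  have "(\<Sum>i<N. if \<bar>m i\<bar> \<le> K then 0 else \<bar>m i\<bar>) \<le> (\<Sum>i<N. (m i)\<^sup>2 / K)"
  proof (rule sum_mono)
    fix i
    have "\<bar>m i\<bar> * K \<le> \<bar>m i\<bar> * \<bar>m i\<bar>" if "\<not> \<bar>m i\<bar> \<le> K"
      using that by (intro mult_left_mono) auto
    then show "(if \<bar>m i\<bar> \<le> K then 0 else \<bar>m i\<bar>) \<le> (m i)\<^sup>2 / K"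
      using K by (auto simp: field_simps power2_eq_square)
  qed
  also have "\<dots> \<le> L\<^sup>2 * real N / K"
    unfolding sum_divide_distrib[symmetric] using sq K by (simp add: divide_right_mono)
  also have "\<dots> = d * real N / 2"
    unfolding K_def using L d by (simp add: field_simps)
  moreover have "(\<Sum>i<N. \<bar>m i\<bar>) = (\<Sum>i<N. \<bar>f i\<bar>) + (\<Sum>i<N. if \<bar>m i\<bar> \<le> K then 0 else \<bar>m i\<bar>)"
    unfolding sum.distrib[symmetric] f_def by (rule sum.cong) auto
  ultimately have "(\<Sum>i<N. \<bar>f i\<bar>) \<ge> d * real N / 2"
    using abs by linarith
  then have "(d * real N / 2)\<^sup>2 \<le> (\<Sum>i<N. 1 * \<bar>f i\<bar>)\<^sup>2"
    using d by (intro power_mono) auto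
  also have "\<dots> \<le> real N * (\<Sum>i<N. (f i)\<^sup>2)"
    using Cauchy_Schwarz_ineq_sum[of "\<lambda>_. 1" "\<lambda>i. \<bar>f i\<bar>" "{..<N}"] by simp
  finally have "real N * (d\<^sup>2 / 4 * real N) \<le> real N * (\<Sum>i<N. (f i)\<^sup>2)"
    by (simp add: power2_eq_square field_simps)
  then have "d\<^sup>2 / 4 * real N \<le> (\<Sum>i<N. (f i)\<^sup>2)"
    by (cases "N = 0") auto
  also have "(\<Sum>i<N. (f i)\<^sup>2) = (\<Sum>i<N. if \<bar>m i\<bar> \<le> K then (m i)\<^sup>2 else 0)"
    unfolding f_def by (rule sum.cong) auto
  finally show ?thesis unfolding K_def .
qed

lemma Inf_root_estimating_fn_near:
  fixes q \<beta> \<epsilon> h K :: real and N :: nat and m :: "nat \<Rightarrow> real"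
  defines "g \<equiv> estimating_fn q N m"
  assumes q: "q \<ge> 0" and \<epsilon>: "0 < \<epsilon>" "\<epsilon> \<le> \<beta>"
    and miss: "\<bar>h - g \<beta>\<bar> < \<epsilon> * q * (1 - tanh (q * (2 * \<beta>) * K) ^ 2)
                                * (\<Sum>i<N. if \<bar>m i\<bar> \<le> K then (m i)\<^sup>2 else 0)"
  shows "\<bar>Inf (ereal ` {b. b \<ge> 0 \<and> h = g b}) - ereal \<beta>\<bar> \<le> ereal \<epsilon>"
proof -
  let ?R = "{b. b \<ge> 0 \<and> h = g b}"
  have "g \<beta> - g (\<beta> - \<epsilon>) \<ge> \<epsilon> * q * (1 - tanh (q * (2 * \<beta>) * K) ^ 2)
      * (\<Sum>i<N. if \<bar>m i\<bar> \<le> K then (m i)\<^sup>2 else 0)"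
    using estimating_fn_diff_ge[where a = "\<beta> - \<epsilon>" and b = \<beta> and B = "2 * \<beta>" and K = K] q \<epsilon> unfolding g_def by simp
  then have lo: "h - g (\<beta> - \<epsilon>) > 0" using miss by linarith
  have "g (\<beta> + \<epsilon>) - g \<beta> \<ge> \<epsilon> * q * (1 - tanh (q * (2 * \<beta>) * K) ^ 2)
      * (\<Sum>i<N. if \<bar>m i\<bar> \<le> K then (m i)\<^sup>2 else 0)"
    using estimating_fn_diff_ge[where a = \<beta> and b = "\<beta> + \<epsilon>" and B = "2 * \<beta>" and K = K] q \<epsilon> unfolding g_def by simp
  then have hi: "h - g (\<beta> + \<epsilon>) < 0" using miss by linarith
  have "continuous_on {\<beta> - \<epsilon> .. \<beta> + \<epsilon>} (\<lambda>b. h - g b)"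
    unfolding g_def estimating_fn_def by (intro continuous_intros) auto
  then obtain r where r: "\<beta> - \<epsilon> \<le> r" "r \<le> \<beta> + \<epsilon>" "h - g r = 0"
    using IVT2'[of "\<lambda>b. h - g b" "\<beta> + \<epsilon>" 0 "\<beta> - \<epsilon>"] lo hi \<epsilon> by auto
  then have upper: "Inf (ereal ` ?R) \<le> ereal (\<beta> + \<epsilon>)"
    using \<epsilon> by (intro Inf_lower2[of "ereal r"]) auto
  have lower: "ereal (\<beta> - \<epsilon>) \<le> Inf (ereal ` ?R)"
  proof (rule Inf_greatest)
    fix y assume "y \<in> ereal ` ?R"
    then obtain b where b: "y = ereal b" "h = g b" by auto
    have "\<beta> - \<epsilon> \<le> b"
    proof (rule ccontr)
      assume "\<not> \<beta> - \<epsilon> \<le> b"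
      then have "g b \<le> g (\<beta> - \<epsilon>)"
        using estimating_fn_mono[OF q] unfolding g_def mono_def by simp
      then show False using lo b by simp
    qed
    then show "ereal (\<beta> - \<epsilon>) \<le> y" using b by simp
  qed
  from upper lower obtain s where "Inf (ereal ` ?R) = ereal s" "\<bar>s - \<beta>\<bar> \<le> \<epsilon>"
    by (cases "Inf (ereal ` ?R)") auto
  then show ?thesis by simp
qed

section \<open>Good configurations and their probability\<close>

context ising_model
begin

lemma sum_pl_score_term_eq:
  "(\<Sum>i<N. U x i) = hamiltonian p N J x - estimating_fn (real p) N (m x) \<beta>"
  unfolding pl_score_term_def estimating_fn_def hamiltonian_eq_sum_local_field[OF v p2]
  by (simp add: sum_subtractf algebra_simps)

lemma sqrt_mult_mpl_error_le:
  assumes x: "x \<in> spins N" and N: "N \<ge> 1" and L: "L > 0" and d: "d > 0" and M: "M > 0"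
    and norm: "nrm x \<le> L" and score: "\<bar>\<Sum>i<N. U x i\<bar> < A * sqrt (real N)"
    and fields: "(\<Sum>i<N. \<bar>m x i\<bar>) \<ge> d * real N"
    and M_le: "M \<le> \<beta> * sqrt (real N)"
    and A_le: "A \<le> M * real p * (1 - tanh (real p * (2 * \<beta>) * (2 * L\<^sup>2 / d)) ^ 2) * (d\<^sup>2 / 4)"
  shows "ereal (sqrt (real N)) * \<bar>mpl_estimate p N J x - ereal \<beta>\<bar> \<le> ereal M"
proof -
  define s where "s = 1 - tanh (real p * (2 * \<beta>) * (2 * L\<^sup>2 / d)) ^ 2"
  define \<epsilon> where "\<epsilon> = M / sqrt (real N)"
  have sqrtN: "sqrt (real N) > 0" using N by simp
  have \<epsilon>: "0 < \<epsilon>" "\<epsilon> \<le> \<beta>"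
    unfolding \<epsilon>_def using M M_le sqrtN by (auto simp: field_simps)
  have "0 \<le> s" unfolding s_def by (rule one_minus_tanh_sq_nonneg)
  have "(nrm x)\<^sup>2 \<le> L\<^sup>2"
    using norm op_norm_nonneg by (intro power_mono) auto
  then have "(\<Sum>i<N. (m x i)\<^sup>2) \<le> L\<^sup>2 * real N"
    using sum_sq_local_field_le[OF x] by (meson mult_right_mono of_nat_0_le_iff order_trans)
  then have truncated: "d\<^sup>2 / 4 * real N
      \<le> (\<Sum>i<N. if \<bar>m x i\<bar> \<le> 2 * L\<^sup>2 / d then (m x i)\<^sup>2 else 0)"
    by (rule sum_sq_truncated_ge[OF L d _ fields])
  have "\<bar>hamiltonian p N J x - estimating_fn (real p) N (m x) \<beta>\<bar> < A * sqrt (real N)"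
    using score unfolding sum_pl_score_term_eq .
  also have "\<dots> \<le> M * real p * s * (d\<^sup>2 / 4) * sqrt (real N)"
    using A_le sqrtN unfolding s_def by (intro mult_right_mono) auto
  also have "\<dots> = \<epsilon> * real p * s * (d\<^sup>2 / 4 * real N)"
  proof -
    have "\<epsilon> * real N = M * (real N / sqrt (real N))"
      unfolding \<epsilon>_def by simp
    also have "real N / sqrt (real N) = sqrt (real N)"
      by (rule real_div_sqrt) simp
    finally show ?thesis by (simp add: mult_ac)
  qed
  also have "\<dots> \<le> \<epsilon> * real p * s * (\<Sum>i<N. if \<bar>m x i\<bar> \<le> 2 * L\<^sup>2 / d then (m x i)\<^sup>2 else 0)"
    using truncated \<epsilon> \<open>0 \<le> s\<close> by (intro mult_left_mono) auto
  finally have "\<bar>mpl_estimate p N J x - ereal \<beta>\<bar> \<le> ereal \<epsilon>"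
    unfolding mpl_estimate_eq s_def
    by (intro Inf_root_estimating_fn_near[where K = "2 * L\<^sup>2 / d"] \<epsilon>) auto
  then obtain r where r: "mpl_estimate p N J x = ereal r" "\<bar>r - \<beta>\<bar> \<le> \<epsilon>"
    by (cases "mpl_estimate p N J x") auto
  then have "sqrt (real N) * \<bar>r - \<beta>\<bar> \<le> M"
    using sqrtN unfolding \<epsilon>_def by (simp add: field_simps)
  then show ?thesis unfolding r by simp
qed

lemma gibbs_prob_op_norm_ge_le:
  assumes "L > 0"
  shows "gibbs_prob p N J \<beta> (\<lambda>x. nrm x \<ge> L) \<le> \<E> (\<lambda>x. (nrm x) ^ 4) / L ^ 4"
proof -
  have "(\<lambda>x. nrm x \<ge> L) = (\<lambda>x. (nrm x) ^ 4 \<ge> L ^ 4)"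
    using assms op_norm_nonneg by (auto intro: power_mono simp: power_mono_iff)
  then show ?thesis
    using gibbs_prob_markov[where f = "\<lambda>x. (nrm x) ^ 4" and a = "L ^ 4"] assms by simp
qed

lemma gibbs_prob_pl_score_ge_le:
  assumes "A > 0" "N \<ge> 1"
  shows "gibbs_prob p N J \<beta> (\<lambda>x. \<bar>\<Sum>i<N. U x i\<bar> \<ge> A * sqrt (real N))
    \<le> (4 + 8 * (real p - 1) + 24 * p\<beta> * (real p - 1)\<^sup>2) * (1 + \<E> (\<lambda>x. (nrm x) ^ 4)) / A\<^sup>2"
proof -
  let ?K = "4 + 8 * (real p - 1) + 24 * p\<beta> * (real p - 1)\<^sup>2"
  have AN: "A\<^sup>2 * real N > 0" using assms by simp
  have iff: "A * sqrt (real N) \<le> \<bar>y\<bar> \<longleftrightarrow> A\<^sup>2 * real N \<le> y\<^sup>2" for y :: real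
  proof -
    have "A * sqrt (real N) = \<bar>A * sqrt (real N)\<bar>" "(A * sqrt (real N))\<^sup>2 = A\<^sup>2 * real N"
      using assms by (simp_all add: power_mult_distrib)
    then show ?thesis by (metis abs_le_square_iff)
  qed
  then have "(\<lambda>x. \<bar>\<Sum>i<N. U x i\<bar> \<ge> A * sqrt (real N)) = (\<lambda>x. (\<Sum>i<N. U x i)\<^sup>2 \<ge> A\<^sup>2 * real N)"
    by (simp only: iff)
  then have "gibbs_prob p N J \<beta> (\<lambda>x. \<bar>\<Sum>i<N. U x i\<bar> \<ge> A * sqrt (real N))
      \<le> \<E> (\<lambda>x. (\<Sum>i<N. U x i)\<^sup>2) / (A\<^sup>2 * real N)"
    using gibbs_prob_markov[where f = "\<lambda>x. (\<Sum>i<N. U x i)\<^sup>2" and a = "A\<^sup>2 * real N"] AN by simp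
  also have "\<dots> \<le> real N * ?K * \<E> (\<lambda>x. 1 + (nrm x) ^ 4) / (A\<^sup>2 * real N)"
    using gibbs_expect_pl_score_sq_le AN by (intro divide_right_mono) auto
  also have "\<dots> = ?K * (1 + \<E> (\<lambda>x. (nrm x) ^ 4)) / A\<^sup>2"
    using assms by (simp add: gibbs_expect_add gibbs_expect_const)
  finally show ?thesis .
qed

lemma gibbs_prob_mpl_error_le_ge:
  assumes N: "N \<ge> 1" and L: "L > 0" and d: "d > 0" and M: "M > 0" and A: "A > 0"
    and M_le: "M \<le> \<beta> * sqrt (real N)"
    and A_le: "A \<le> M * real p * (1 - tanh (real p * (2 * \<beta>) * (2 * L\<^sup>2 / d)) ^ 2) * (d\<^sup>2 / 4)"
  shows "gibbs_prob p N J \<beta> (\<lambda>x. ereal (sqrt (real N)) * \<bar>mpl_estimate p N J x - ereal \<beta>\<bar> \<le> ereal M)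
    \<ge> 1 - \<E> (\<lambda>x. (nrm x) ^ 4) / L ^ 4
        - (4 + 8 * (real p - 1) + 24 * p\<beta> * (real p - 1)\<^sup>2) * (1 + \<E> (\<lambda>x. (nrm x) ^ 4)) / A\<^sup>2
        - exp (\<beta> * d * real N - free_energy p N J \<beta>)"
proof -
  let ?P = "gibbs_prob p N J \<beta>"
  have "?P (\<lambda>x. ereal (sqrt (real N)) * \<bar>mpl_estimate p N J x - ereal \<beta>\<bar> \<le> ereal M)
      \<ge> 1 - ?P (\<lambda>x. \<not> nrm x < L) - ?P (\<lambda>x. \<not> \<bar>\<Sum>i<N. U x i\<bar> < A * sqrt (real N))
        - ?P (\<lambda>x. \<not> (\<Sum>i<N. \<bar>m x i\<bar>) \<ge> d * real N)"
    using sqrt_mult_mpl_error_le[OF _ N L d M _ _ _ M_le A_le]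
    by (intro gibbs_prob_ge_union_bound) auto
  then show ?thesis
    using gibbs_prob_op_norm_ge_le[OF L] gibbs_prob_pl_score_ge_le[OF A N]
      gibbs_prob_small_fields[OF v p2 \<beta>, of d]
    by (simp add: not_less)
qed

end

lemma mpl_error_prob_bound:
  fixes p :: nat and \<beta> \<delta> C c :: real
  assumes p2: "p \<ge> 2" and \<beta>_pos: "\<beta> > 0" and \<delta>: "\<delta> > 0" and C: "C \<ge> 0" and c: "c > 0"
  obtains M where "M > 0"
    and "\<And>N J. N \<ge> 1 \<Longrightarrow> valid_tensor p N J \<Longrightarrow>
           gibbs_expect p N J \<beta> (\<lambda>z. op_norm N (local_matrix p N J z) ^ 4) \<le> C \<Longrightarrow>
           free_energy p N J \<beta> / real N > c \<Longrightarrow> exp (- (c / 2) * real N) < \<delta> / 4 \<Longrightarrow>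
           M \<le> \<beta> * sqrt (real N) \<Longrightarrow>
           gibbs_prob p N J \<beta>
             (\<lambda>x. ereal (sqrt (real N)) * \<bar>mpl_estimate p N J x - ereal \<beta>\<bar> \<le> ereal M) > 1 - \<delta>"
proof -
  define K where "K = 4 + 8 * (real p - 1) + 24 * (real p * \<beta>) * (real p - 1)\<^sup>2"
  define L where "L = 1 + 4 * (C + 1) / \<delta>"
  define A where "A = 1 + 4 * (K * (1 + C)) / \<delta>"
  define d where "d = c / (2 * \<beta>)"
  define s where "s = 1 - tanh (real p * (2 * \<beta>) * (2 * L\<^sup>2 / d)) ^ 2"
  define X where "X = real p * s * (d\<^sup>2 / 4)"
  define M where "M = A / X + 1"
  have "K \<ge> 0" unfolding K_def using p2 \<beta>_pos by simp
  have L: "L \<ge> 1" unfolding L_def using C \<delta> by simp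
  have A: "A \<ge> 1" unfolding A_def using \<open>K \<ge> 0\<close> C \<delta> by simp
  have d: "d > 0" unfolding d_def using c \<beta>_pos by simp
  have "\<bar>tanh (real p * (2 * \<beta>) * (2 * L\<^sup>2 / d))\<bar> < 1"
    using tanh_real_bounds by (simp add: abs_less_iff)
  then have s: "s > 0" unfolding s_def by (simp add: abs_square_less_1)
  have X: "X > 0" unfolding X_def using p2 s d by simp
  have M: "M > 0" unfolding M_def using A X by (simp add: add_nonneg_pos)
  have "M * X = A + X"
    unfolding M_def using X by (simp add: distrib_right)
  then have A_le: "A \<le> M * real p * s * (d\<^sup>2 / 4)"
    using X unfolding X_def by (simp add: mult.assoc)
  show ?thesis
  proof (rule that[OF M])
    fix N J
    assume N: "N \<ge> 1" and v: "valid_tensor p N J"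
      and moment: "gibbs_expect p N J \<beta> (\<lambda>z. op_norm N (local_matrix p N J z) ^ 4) \<le> C"
      and free: "free_energy p N J \<beta> / real N > c" and small: "exp (- (c / 2) * real N) < \<delta> / 4"
      and M_le: "M \<le> \<beta> * sqrt (real N)"
    interpret ising_model p N J \<beta> using v p2 \<beta>_pos by unfold_locales auto
    have "\<E> (\<lambda>x. (nrm x) ^ 4) / L ^ 4 \<le> C / L"
      using moment L C power_increasing[of 1 4 L] by (auto intro!: frac_le)
    also have "\<dots> < \<delta> / 4" unfolding L_def using C \<delta> by (simp add: field_simps add_pos_pos)
    finally have P1: "\<E> (\<lambda>x. (nrm x) ^ 4) / L ^ 4 < \<delta> / 4" .
    have "K * (1 + \<E> (\<lambda>x. (nrm x) ^ 4)) / A\<^sup>2 \<le> K * (1 + C) / A"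
      using moment A C \<open>K \<ge> 0\<close> by (intro frac_le mult_left_mono) (auto simp: power2_eq_square)
    also have "\<dots> < \<delta> / 4"
    proof -
      have "\<delta> * A = \<delta> + 4 * (K * (1 + C))" unfolding A_def using \<delta> by (simp add: field_simps)
      then have "4 * (K * (1 + C)) < \<delta> * A" using \<delta> by linarith
      then show ?thesis using A by (simp add: pos_divide_less_eq)
    qed
    finally have P2: "K * (1 + \<E> (\<lambda>x. (nrm x) ^ 4)) / A\<^sup>2 < \<delta> / 4" .
    have "\<beta> * d * real N - free_energy p N J \<beta> \<le> - (c / 2) * real N"
      using free N \<beta>_pos unfolding d_def by (simp add: field_simps)
    then have P3: "exp (\<beta> * d * real N - free_energy p N J \<beta>) < \<delta> / 4"
      using small by (meson exp_le_cancel_iff le_less_trans)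
    show "gibbs_prob p N J \<beta>
        (\<lambda>x. ereal (sqrt (real N)) * \<bar>mpl_estimate p N J x - ereal \<beta>\<bar> \<le> ereal M) > 1 - \<delta>"
      using gibbs_prob_mpl_error_le_ge[OF N _ d M _ M_le A_le[unfolded s_def]] L A P1 P2 P3 \<delta>
      unfolding K_def by simp
  qed
qed

lemma eventually_gt_of_liminf_pos:
  assumes "liminf (\<lambda>n. ereal (f n)) > 0"
  obtains c :: real where "c > 0" "eventually (\<lambda>n. f n > c) sequentially"
proof -
  obtain z where "0 < ereal z" "ereal z < liminf (\<lambda>n. ereal (f n))"
    using ereal_dense2[OF assms] by blast
  moreover from this(2) have "\<forall>\<^sub>F n in sequentially. ereal z < ereal (f n)"
    by (rule less_LiminfD)
  ultimately show ?thesis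
    using that[of z] by simp
qed

theorem mainTheorem13:
  fixes p :: nat and \<beta> :: real and J :: "nat \<Rightarrow> nat list \<Rightarrow> real"
  assumes "p \<ge> 2" and "\<beta> > 0"
    and "\<And>N. N \<ge> 1 \<Longrightarrow> valid_tensor p N (J N)"
    and "\<exists>C. \<forall>N\<ge>1. gibbs_expect p N (J N) \<beta> (\<lambda>z. (op_norm N (local_matrix p N (J N) z)) ^ 4) \<le> C"
    and "liminf (\<lambda>N. ereal (free_energy p N (J N) \<beta> / real N)) > 0"
  shows "\<forall>\<delta>>0. \<exists>M>0. \<forall>\<^sub>F N in sequentially.
           gibbs_prob p N (J N) \<beta>
             (\<lambda>x. ereal (sqrt (real N)) * \<bar>mpl_estimate p N (J N) x - ereal \<beta>\<bar> \<le> ereal M)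
           > 1 - \<delta>"
proof (intro allI impI)
  fix \<delta> :: real assume "\<delta> > 0"
  obtain C where C: "\<forall>N\<ge>1. gibbs_expect p N (J N) \<beta> (\<lambda>z. (op_norm N (local_matrix p N (J N) z)) ^ 4) \<le> C"
    using assms(4) by blast
  obtain c where "c > 0" and free: "\<forall>\<^sub>F N in sequentially. free_energy p N (J N) \<beta> / real N > c"
    using eventually_gt_of_liminf_pos[OF assms(5)] by blast
  obtain M where "M > 0" and bound: "\<And>N J. N \<ge> 1 \<Longrightarrow> valid_tensor p N J \<Longrightarrow>
      gibbs_expect p N J \<beta> (\<lambda>z. op_norm N (local_matrix p N J z) ^ 4) \<le> max C 0 \<Longrightarrow>
      free_energy p N J \<beta> / real N > c \<Longrightarrow> exp (- (c / 2) * real N) < \<delta> / 4 \<Longrightarrow>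
      M \<le> \<beta> * sqrt (real N) \<Longrightarrow>
      gibbs_prob p N J \<beta> (\<lambda>x. ereal (sqrt (real N)) * \<bar>mpl_estimate p N J x - ereal \<beta>\<bar> \<le> ereal M)
        > 1 - \<delta>"
    using mpl_error_prob_bound[OF assms(1,2) \<open>\<delta> > 0\<close> _ \<open>c > 0\<close>, of "max C 0"] by auto
  have "\<forall>\<^sub>F N in sequentially. exp (- (c / 2) * real N) < \<delta> / 4"
    using \<open>c > 0\<close> \<open>\<delta> > 0\<close> by real_asymp
  moreover have "\<forall>\<^sub>F N in sequentially. M \<le> \<beta> * sqrt (real N)"
    using \<open>\<beta> > 0\<close> by real_asymp
  ultimately have "\<forall>\<^sub>F N in sequentially. gibbs_prob p N (J N) \<beta>
      (\<lambda>x. ereal (sqrt (real N)) * \<bar>mpl_estimate p N (J N) x - ereal \<beta>\<bar> \<le> ereal M) > 1 - \<delta>"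
    using free eventually_ge_at_top[of 1]
    by eventually_elim (use C assms(3) in \<open>auto intro!: bound\<close>)
  then show "\<exists>M>0. \<forall>\<^sub>F N in sequentially. gibbs_prob p N (J N) \<beta>
      (\<lambda>x. ereal (sqrt (real N)) * \<bar>mpl_estimate p N (J N) x - ereal \<beta>\<bar> \<le> ereal M) > 1 - \<delta>"
    using \<open>M > 0\<close> by blast
qed

end
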